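(* In the rank $4$ setting of the context, let $\hat X$ be the flag simplicial complex with the same vertex set as $X$ in which two vertices are adjacent if they are adjacent in $X$, or are friends, or are acquaintances. Then the link in $\hat X$ of any edge of type $\mathbf{ab}$ is a simplex.
   Context: Let $W$ be a Coxeter group of rank $4$ with finite exponents, all special rank $3$ subgroups infinite and not of type $(2,4,4),(2,4,5),(2,5,5)$, and exactly one exponent equal to $2$. Let $X$ be the Coxeter realization (finite thickness) of a building of type $W$ with base chamber $T=\mathbf{abcd}$; a simplex has type $I\subset\mathbf{abcd}$ if it maps to $I$ under the type retraction. Each edge $I$ of $T$ is labeled by an exponent $i$ such that the link of an edge of type $I$ is a bipartite graph of girth $2i$. Labels: $\mathbf{ab}$: $2$; $\mathbf{ac}$: $m\ge6$; $\mathbf{ad}$: $k\ge3$; $\mathbf{cd}$: $l\ge3$; and either Case I: $\mathbf{bc}$: $k'\ge3$, $\mathbf{bd}$: $m'\ge6$, or Case II: $\mathbf{bc}$: $m'\ge6$, $\mathbf{bd}$: $k'\ge3$. Two simplices are adjacent if they span a simplex. Two distinct vertices of the same type $\mathbf c$ or $\mathbf d$ are friends if adjacent to a common edge of type $\mathbf{ab}$; acquaintances if not friends but adjacent to a common edge whose type is labeled $k$ or $k'$. The flag complex spanned on a graph has a simplex for each finite clique. *)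

theory Defs
  imports Main "HOL-Library.Multiset"
begin

datatype gen = Ta | Tb | Tc | Td

fun alt :: "'s \<Rightarrow> 's \<Rightarrow> nat \<Rightarrow> 's list" where
  "alt s t 0 = []"
| "alt s t (Suc n) = s # alt t s n"

inductive cox_step :: "('s \<Rightarrow> 's \<Rightarrow> nat) \<Rightarrow> 's list \<Rightarrow> 's list \<Rightarrow> bool" for M where
  cancel: "cox_step M (p @ [s, s] @ q) (p @ q)"
| braid: "s \<noteq> t \<Longrightarrow> cox_step M (p @ alt s t (M s t) @ q) (p @ alt t s (M s t) @ q)"

definition weq :: "('s \<Rightarrow> 's \<Rightarrow> nat) \<Rightarrow> 's list \<Rightarrow> 's list \<Rightarrow> bool" where
  "weq M = equivclp (cox_step M)"

definition coxeter_matrix :: "('s \<Rightarrow> 's \<Rightarrow> nat) \<Rightarrow> bool" where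
  "coxeter_matrix M \<longleftrightarrow> (\<forall>s t. M s t = M t s) \<and> (\<forall>s. M s s = 1) \<and> (\<forall>s t. s \<noteq> t \<longrightarrow> M s t \<ge> 2)"

definition wlen :: "('s \<Rightarrow> 's \<Rightarrow> nat) \<Rightarrow> 's list \<Rightarrow> nat" where
  "wlen M w = (LEAST n. \<exists>v. weq M w v \<and> length v = n)"

definition special_subgroup :: "('s \<Rightarrow> 's \<Rightarrow> nat) \<Rightarrow> 's set \<Rightarrow> 's list set set" where
  "special_subgroup M J = (\<lambda>v. {u. weq M u v}) ` {v. set v \<subseteq> J}"

section \<open>Buildings of type (W,S) as W-metric spaces (Abramenko--Brown, Def. 5.1)\<close>

definition W_building :: "('s \<Rightarrow> 's \<Rightarrow> nat) \<Rightarrow> 'c set \<Rightarrow> ('c \<Rightarrow> 'c \<Rightarrow> 's list) \<Rightarrow> bool" where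
  "W_building M Ch \<delta> \<longleftrightarrow>
     (\<forall>x\<in>Ch. \<forall>y\<in>Ch. weq M (\<delta> x y) [] \<longleftrightarrow> x = y) \<and>
     (\<forall>x\<in>Ch. \<forall>y\<in>Ch. \<forall>x'\<in>Ch. \<forall>s. weq M (\<delta> x' x) [s] \<longrightarrow>
         (weq M (\<delta> x' y) (s # \<delta> x y) \<or> weq M (\<delta> x' y) (\<delta> x y)) \<and>
         (wlen M (s # \<delta> x y) = Suc (wlen M (\<delta> x y)) \<longrightarrow> weq M (\<delta> x' y) (s # \<delta> x y))) \<and>
     (\<forall>x\<in>Ch. \<forall>y\<in>Ch. \<forall>s. \<exists>x'\<in>Ch. weq M (\<delta> x' x) [s] \<and> weq M (\<delta> x' y) (s # \<delta> x y))"

definition finite_thickness :: "('s \<Rightarrow> 's \<Rightarrow> nat) \<Rightarrow> 'c set \<Rightarrow> ('c \<Rightarrow> 'c \<Rightarrow> 's list) \<Rightarrow> bool" where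
  "finite_thickness M Ch \<delta> \<longleftrightarrow> (\<forall>x\<in>Ch. \<forall>s. finite {x'\<in>Ch. weq M (\<delta> x' x) [s]})"

text \<open>Vertex of type s of the chamber x: the residue of type S - {s} containing x,
  tagged with its type.\<close>
definition vert :: "('s \<Rightarrow> 's \<Rightarrow> nat) \<Rightarrow> 'c set \<Rightarrow> ('c \<Rightarrow> 'c \<Rightarrow> 's list) \<Rightarrow> 's \<Rightarrow> 'c \<Rightarrow> 's \<times> 'c set" where
  "vert M Ch \<delta> s x = (s, {y\<in>Ch. \<exists>w. weq M (\<delta> x y) w \<and> s \<notin> set w})"

definition X_vertices :: "('s \<Rightarrow> 's \<Rightarrow> nat) \<Rightarrow> 'c set \<Rightarrow> ('c \<Rightarrow> 'c \<Rightarrow> 's list) \<Rightarrow> ('s \<times> 'c set) set" where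
  "X_vertices M Ch \<delta> = {vert M Ch \<delta> s x | s x. x \<in> Ch}"

definition X_simplex :: "('s \<Rightarrow> 's \<Rightarrow> nat) \<Rightarrow> 'c set \<Rightarrow> ('c \<Rightarrow> 'c \<Rightarrow> 's list) \<Rightarrow> ('s \<times> 'c set) set \<Rightarrow> bool" where
  "X_simplex M Ch \<delta> \<sigma> \<longleftrightarrow> \<sigma> \<noteq> {} \<and> (\<exists>x\<in>Ch. \<sigma> \<subseteq> {vert M Ch \<delta> s x | s. True})"

definition stype :: "('s \<times> 'c set) set \<Rightarrow> 's set" where
  "stype \<sigma> = fst ` \<sigma>"

definition adj_vs :: "('s \<Rightarrow> 's \<Rightarrow> nat) \<Rightarrow> 'c set \<Rightarrow> ('c \<Rightarrow> 'c \<Rightarrow> 's list) \<Rightarrow> ('s \<times> 'c set) \<Rightarrow> ('s \<times> 'c set) set \<Rightarrow> bool" where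
  "adj_vs M Ch \<delta> v e \<longleftrightarrow> v \<notin> e \<and> X_simplex M Ch \<delta> (insert v e)"

definition X_adj :: "('s \<Rightarrow> 's \<Rightarrow> nat) \<Rightarrow> 'c set \<Rightarrow> ('c \<Rightarrow> 'c \<Rightarrow> 's list) \<Rightarrow> ('s \<times> 'c set) \<Rightarrow> ('s \<times> 'c set) \<Rightarrow> bool" where
  "X_adj M Ch \<delta> u v \<longleftrightarrow> u \<noteq> v \<and> X_simplex M Ch \<delta> {u, v}"

text \<open>Label of an edge type I (a 2-subset of S): the exponent m_st of the complementary pair
  {s,t} = S - I; the link of an edge of type I is the generalized m_st-gon (girth 2 m_st).\<close>
definition edge_label :: "(gen \<Rightarrow> gen \<Rightarrow> nat) \<Rightarrow> gen set \<Rightarrow> nat" where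
  "edge_label M I = (THE n. \<exists>s t. s \<noteq> t \<and> UNIV - I = {s, t} \<and> n = M s t)"

definition friends :: "(gen \<Rightarrow> gen \<Rightarrow> nat) \<Rightarrow> 'c set \<Rightarrow> (gen \<times> 'c set) \<Rightarrow> (gen \<times> 'c set) \<Rightarrow> ('c \<Rightarrow> 'c \<Rightarrow> gen list) \<Rightarrow> bool" where
  "friends M Ch u v \<delta> \<longleftrightarrow> u \<in> X_vertices M Ch \<delta> \<and> v \<in> X_vertices M Ch \<delta> \<and> u \<noteq> v \<and>
     fst u = fst v \<and> fst u \<in> {Tc, Td} \<and>
     (\<exists>e. X_simplex M Ch \<delta> e \<and> stype e = {Ta, Tb} \<and> adj_vs M Ch \<delta> u e \<and> adj_vs M Ch \<delta> v e)"

text \<open>K: the set of edge types labeled k or k'.\<close>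
definition acquaintances :: "(gen \<Rightarrow> gen \<Rightarrow> nat) \<Rightarrow> 'c set \<Rightarrow> ('c \<Rightarrow> 'c \<Rightarrow> gen list) \<Rightarrow> gen set set \<Rightarrow> (gen \<times> 'c set) \<Rightarrow> (gen \<times> 'c set) \<Rightarrow> bool" where
  "acquaintances M Ch \<delta> K u v \<longleftrightarrow> u \<in> X_vertices M Ch \<delta> \<and> v \<in> X_vertices M Ch \<delta> \<and> u \<noteq> v \<and>
     fst u = fst v \<and> fst u \<in> {Tc, Td} \<and> \<not> friends M Ch u v \<delta> \<and>
     (\<exists>e. X_simplex M Ch \<delta> e \<and> stype e \<in> K \<and> adj_vs M Ch \<delta> u e \<and> adj_vs M Ch \<delta> v e)"

definition hat_adj :: "(gen \<Rightarrow> gen \<Rightarrow> nat) \<Rightarrow> 'c set \<Rightarrow> ('c \<Rightarrow> 'c \<Rightarrow> gen list) \<Rightarrow> gen set set \<Rightarrow> (gen \<times> 'c set) \<Rightarrow> (gen \<times> 'c set) \<Rightarrow> bool" where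
  "hat_adj M Ch \<delta> K u v \<longleftrightarrow> X_adj M Ch \<delta> u v \<or> friends M Ch u v \<delta> \<or> acquaintances M Ch \<delta> K u v"

definition flag_complex :: "'v set \<Rightarrow> ('v \<Rightarrow> 'v \<Rightarrow> bool) \<Rightarrow> 'v set set" where
  "flag_complex V E = {\<sigma>. finite \<sigma> \<and> \<sigma> \<noteq> {} \<and> \<sigma> \<subseteq> V \<and> (\<forall>u\<in>\<sigma>. \<forall>v\<in>\<sigma>. u \<noteq> v \<longrightarrow> E u v)}"

definition link :: "'v set set \<Rightarrow> 'v set \<Rightarrow> 'v set set" where
  "link K \<sigma> = {\<tau>. \<tau> \<in> K \<and> \<tau> \<inter> \<sigma> = {} \<and> \<tau> \<union> \<sigma> \<in> K}"

definition is_simplex_complex :: "'v set set \<Rightarrow> bool" where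
  "is_simplex_complex L \<longleftrightarrow> (\<exists>\<rho>. finite \<rho> \<and> \<rho> \<noteq> {} \<and> L = {\<tau>. \<tau> \<noteq> {} \<and> \<tau> \<subseteq> \<rho>})"

end

theory Submission
  imports Defs Complex_Main
begin

text \<open>
  A vertex in the link of the edge \<open>e = {v\<^sub>a, v\<^sub>b}\<close> of \<open>X\<close>-hat is hat-adjacent to both
  endpoints of \<open>e\<close>; friends and acquaintances have a common type \<open>c\<close> or \<open>d\<close>, so it is
  adjacent to them in \<open>X\<close> itself.  Such a vertex lies in the \<open>{c, d}\<close>-residue \<open>R\<close> of a
  chamber containing \<open>e\<close>.  This is a consequence of the intersection property of parabolic
  subgroups of \<open>W\<close>, which rests on the deletion condition (proved by Tits' reflection
  counting) and on Tits' geometric representation.  Conversely the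
  vertices of \<open>R\<close> span a simplex of \<open>X\<close>-hat: two of them of the same type are friends
  through \<open>e\<close>, and since the label of \<open>ab\<close> is \<open>m\<^sub>c\<^sub>d = 2\<close>, the residue \<open>R\<close> is a
  generalized digon, so every \<open>c\<close>-vertex of \<open>R\<close> shares a chamber with every \<open>d\<close>-vertex.
  By finite thickness \<open>R\<close> is finite, hence the link of \<open>e\<close> is a single simplex.
\<close>

lemma cox_step_in_context: "cox_step M u v \<Longrightarrow> cox_step M (p@u@q) (p@v@q)"
proof (induction rule: cox_step.induct)
  case (cancel p' s q')
  then show ?case using cox_step.cancel[where M=M and p="p@p'" and s=s and q="q'@q"] by simp
next
  case (braid s t p' q')
  then show ?case using cox_step.braid[where M=M and p="p@p'" and s=s and t=t and q="q'@q"] by simp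
qed

lemma weq_refl[simp]: "weq M u u" unfolding weq_def by simp
lemma weq_sym: "weq M u v \<Longrightarrow> weq M v u" unfolding weq_def by (rule equivclp_sym)
lemma weq_trans[trans]: "weq M u v \<Longrightarrow> weq M v w \<Longrightarrow> weq M u w" unfolding weq_def by (rule equivclp_trans)
lemma cox_step_weq: "cox_step M u v \<Longrightarrow> weq M u v" unfolding weq_def by blast

lemma weq_in_context: "weq M u v \<Longrightarrow> weq M (p@u@q) (p@v@q)"
  unfolding weq_def
proof (induction rule: equivclp_induct)
  case base then show ?case by simp
next
  case (step y z)
  then show ?case
    by (meson cox_step_in_context equivclp_into_equivclp)
qed

lemma weq_append: "weq M u u' \<Longrightarrow> weq M v v' \<Longrightarrow> weq M (u@v) (u'@v')"
  using weq_in_context[of M u u' "[]" v] weq_in_context[of M v v' u' "[]"] by (auto intro: weq_trans)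

lemma weq_Cons: "weq M u v \<Longrightarrow> weq M (s#u) (s#v)"
  using weq_append[of M "[s]" "[s]" u v] by simp

lemma weq_square_cancel: "weq M (p@[s,s]@q) (p@q)"
  by (rule cox_step_weq) (rule cox_step.cancel)

lemma weq_Cons_Cons: "weq M (s#s#q) q"
  using weq_square_cancel[of M "[]" s q] by simp

lemma weq_append_rev_Nil: "weq M (w @ rev w) []"
proof (induction w)
  case Nil then show ?case by simp
next
  case (Cons a w)
  have "weq M ([a] @ (w @ rev w) @ [a]) ([a] @ [] @ [a])" using weq_in_context[OF Cons] .
  moreover have "weq M [a,a] []" using weq_Cons_Cons[of M a "[]"] by simp
  ultimately show ?case by (auto intro: weq_trans)
qed

lemma weq_rev_append_Nil: "weq M (rev w @ w) []"
  using weq_append_rev_Nil[of M "rev w"] by simp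

lemma weq_rev: assumes "weq M u v" shows "weq M (rev u) (rev v)"
proof -
  have "weq M (rev v) (rev v @ (u @ rev u))" using weq_append[OF weq_refl weq_sym[OF weq_append_rev_Nil[of M u]]] by simp
  also have "weq M (rev v @ (u @ rev u)) (rev v @ (v @ rev u))" using weq_in_context[OF assms, of "rev v" "rev u"] by simp
  also have "weq M (rev v @ (v @ rev u)) ([] @ rev u)" using weq_append[OF weq_rev_append_Nil[of M v] weq_refl[of M "rev u"]] by simp
  finally have "weq M (rev v) (rev u)" by simp
  then show ?thesis by (rule weq_sym)
qed

lemma weq_append_cancel_left: "weq M (p@u) (p@v) \<Longrightarrow> weq M u v"
proof -
  assume "weq M (p@u) (p@v)"
  then have "weq M (rev p @ (p@u)) (rev p @ (p @ v))" using weq_append[OF weq_refl] by blast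
  moreover have "weq M (rev p @ p @ u) u" using weq_append[OF weq_rev_append_Nil[of M p] weq_refl[of M u]] by simp
  moreover have "weq M (rev p @ p @ v) v" using weq_append[OF weq_rev_append_Nil[of M p] weq_refl[of M v]] by simp
  ultimately show ?thesis by (metis weq_sym weq_trans append_assoc)
qed

lemma weq_append_cancel_right: "weq M (u@p) (v@p) \<Longrightarrow> weq M u v"
proof -
  assume "weq M (u@p) (v@p)"
  then have "weq M (rev p @ rev u) (rev p @ rev v)" using weq_rev by fastforce
  then have "weq M (rev u) (rev v)" by (rule weq_append_cancel_left)
  then show ?thesis using weq_rev by fastforce
qed

lemma weq_append_right_iff: "weq M (u@p) v \<longleftrightarrow> weq M u (v @ rev p)"
proof
  assume "weq M (u@p) v"
  then have "weq M (u@p@rev p) (v @ rev p)" using weq_append[OF _ weq_refl] by fastforce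
  moreover have "weq M (u@p@rev p) u" using weq_append[OF weq_refl weq_append_rev_Nil[of M p], of u] by simp
  ultimately show "weq M u (v @ rev p)" by (meson weq_sym weq_trans)
next
  assume "weq M u (v @ rev p)"
  then have "weq M (u@p) (v @ rev p @ p)" using weq_append[OF _ weq_refl] by fastforce
  moreover have "weq M (v@rev p@p) v" using weq_append[OF weq_refl weq_rev_append_Nil[of M p], of v] by simp
  ultimately show "weq M (u@p) v" by (meson weq_sym weq_trans)
qed

lemma wlen_attained: "\<exists>v. weq M w v \<and> length v = wlen M w"
  unfolding wlen_def by (rule LeastI[of _ "length w"]) (auto intro: exI[of _ w])

lemma wlen_le: "weq M w v \<Longrightarrow> wlen M w \<le> length v"
  unfolding wlen_def by (rule Least_le) auto

lemma wlen_le_length: "wlen M w \<le> length w"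
  by (rule wlen_le) simp

lemma wlen_weq: assumes "weq M u v" shows "wlen M u = wlen M v"
proof -
  obtain a where a: "weq M u a" "length a = wlen M u" using wlen_attained by blast
  obtain b where b: "weq M v b" "length b = wlen M v" using wlen_attained by blast
  have "wlen M u \<le> wlen M v" using wlen_le[of M u b] assms b by (metis weq_trans)
  moreover have "wlen M v \<le> wlen M u" using wlen_le[of M v a] assms a by (metis weq_trans weq_sym)
  ultimately show ?thesis by simp
qed

definition reduced :: "('s \<Rightarrow> 's \<Rightarrow> nat) \<Rightarrow> 's list \<Rightarrow> bool" where
  "reduced M w \<longleftrightarrow> wlen M w = length w"

lemma reduced_appendD: assumes "reduced M (u@v)" shows "reduced M u" "reduced M v"
proof -
  obtain a where a: "weq M u a" "length a = wlen M u" using wlen_attained by blast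
  obtain b where b: "weq M v b" "length b = wlen M v" using wlen_attained by blast
  have "wlen M (u@v) \<le> wlen M u + length v" using wlen_le[of M "u@v" "a@v"] weq_append[OF a(1) weq_refl] a(2) by simp
  moreover have "wlen M (u@v) \<le> length u + wlen M v" using wlen_le[of M "u@v" "u@b"] weq_append[OF weq_refl b(1)] b(2) by simp
  ultimately show "reduced M u" "reduced M v" using assms wlen_le_length[of M u] wlen_le_length[of M v]
    unfolding reduced_def by auto
qed

lemma wlen_rev: "wlen M (rev w) = wlen M w"
proof -
  obtain a where a: "weq M w a" "length a = wlen M w" using wlen_attained by blast
  obtain b where b: "weq M (rev w) b" "length b = wlen M (rev w)" using wlen_attained by blast
  have "wlen M (rev w) \<le> wlen M w" using wlen_le[OF weq_rev[OF a(1)]] a(2) by simp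
  moreover have "wlen M w \<le> wlen M (rev w)" using wlen_le[of M w "rev b"] weq_rev[OF b(1)] b(2) by simp
  ultimately show ?thesis by simp
qed

lemma not_reduced_iff: "\<not> reduced M w \<longleftrightarrow> wlen M w < length w"
  unfolding reduced_def using wlen_le_length[of M w] by auto

lemma length_alt[simp]: "length (alt s t n) = n"
  by (induction n arbitrary: s t) auto

lemma alt_add: "alt s t (a+b) = alt s t a @ (if even a then alt s t b else alt t s b)"
  by (induction a arbitrary: s t) auto

lemma alt_Suc_right: "alt s t (Suc n) = alt s t n @ [if even n then s else t]"
  using alt_add[of s t n 1] by (auto simp: numeral_2_eq_2)

lemma alt_snoc_even: "even n \<Longrightarrow> alt s t n @ [s] = s # alt t s n"
  using alt_Suc_right[of s t n] by simp

lemma alt_snoc_odd: "odd n \<Longrightarrow> alt s t n @ [t] = s # alt t s n"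
  using alt_Suc_right[of s t n] by simp

lemma rev_alt: "rev (alt s t n) = (if even n then alt t s n else alt s t n)"
proof (induction n arbitrary: s t)
  case 0 then show ?case by simp
next
  case (Suc n)
  have "rev (alt s t (Suc n)) = rev (alt t s n) @ [s]" by simp
  also have "\<dots> = (if even n then alt s t n else alt t s n) @ [s]" using Suc by simp
  finally show ?case by (auto simp: alt_snoc_even alt_snoc_odd)
qed

lemma nth_alt: "i < n \<Longrightarrow> alt s t n ! i = (if even i then s else t)"
  by (induction n arbitrary: s t i) (auto simp: nth_Cons split: nat.splits)

lemma take_alt: "i \<le> n \<Longrightarrow> take i (alt s t n) = alt s t i"
  by (induction n arbitrary: s t i) (auto simp: take_Cons split: nat.splits)

lemma alt_odd_split: "alt s t i @ [if even i then s else t] @ rev (alt s t i) = alt s t (2*i+1)"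
proof -
  have e0: "2*i+1 = (i+1)+i" by simp
  have e1: "alt s t (2*i+1) = alt s t (i+1) @ (if even (i+1) then alt s t i else alt t s i)"
    unfolding e0 by (rule alt_add)
  have e2: "alt s t (i+1) = alt s t i @ [if even i then s else t]"
    by (simp only: Suc_eq_plus1[symmetric] alt_Suc_right)
  show ?thesis unfolding e1 e2 rev_alt by simp
qed

lemma weq_alt_double_Nil: assumes "weq M (alt s t m) (alt t s m)" shows "weq M (alt s t (2*m)) []"
proof -
  have "alt s t (2*m) = alt s t m @ rev (alt t s m)"
    using alt_add[of s t m m] rev_alt[of t s m] by (simp add: mult_2)
  moreover have "weq M (alt s t m @ rev (alt t s m)) (alt t s m @ rev (alt t s m))"
    by (rule weq_append[OF assms weq_refl])
  ultimately show ?thesis using weq_append_rev_Nil by (metis weq_trans)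
qed

lemma rev_alt_odd: "rev (alt s t (2*k+1)) = alt s t (2*k+1)"
  by (subst rev_alt) simp

lemma weq_alt_odd_mirror:
  assumes "weq M (alt s t m) (alt t s m)" "i < m"
  shows "weq M (alt s t (2*i+1)) (alt t s (2*(m - Suc i)+1))"
proof -
  have m: "2*m = 2*i+1 + (2*(m - Suc i)+1)" using assms(2) by simp
  have eq: "alt s t (2*m) = alt s t (2*i+1) @ alt t s (2*(m - Suc i)+1)"
    unfolding m by (subst alt_add) simp
  have "weq M (alt s t (2*i+1) @ alt t s (2*(m - Suc i)+1)) []"
    using weq_alt_double_Nil[OF assms(1)] unfolding eq .
  then have "weq M (alt s t (2*i+1)) ([] @ rev (alt t s (2*(m - Suc i)+1)))"
    using weq_append_right_iff by blast
  then show ?thesis unfolding rev_alt_odd append.simps(1) .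
qed

lemma weq_commuting_pair_word_cases:
  assumes st: "s \<noteq> t" and Mst: "M s t = 2"
  shows "set w \<subseteq> {s, t} \<Longrightarrow> weq M w [] \<or> weq M w [s] \<or> weq M w [t] \<or> weq M w [t, s]"
proof (induction w)
  case Nil then show ?case by simp
next
  case (Cons x w)
  have br: "weq M [s, t] [t, s]"
    using cox_step_weq[OF cox_step.braid[OF st, of M "[]" "[]"]] Mst by (simp add: numeral_2_eq_2)
  have "weq M ([s, t] @ [s]) ([t] @ [s, s] @ [])" using weq_append[OF br weq_refl] by simp
  then have sts: "weq M [s, t, s] [t]" using weq_trans[OF _ weq_square_cancel[of M "[t]" s "[]"]] by simp
  have step: "weq M (x # v) [] \<or> weq M (x # v) [s] \<or> weq M (x # v) [t] \<or> weq M (x # v) [t, s]"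
    if "v \<in> {[], [s], [t], [t, s]}" for v
    using that Cons.prems br sts weq_Cons_Cons[of M s "[]"] weq_Cons_Cons[of M t "[]"] weq_Cons_Cons[of M t "[s]"]
    by auto
  from Cons obtain v where v: "weq M w v" "v \<in> {[], [s], [t], [t, s]}" by auto
  show ?case using step[OF v(2)] weq_trans[OF weq_Cons[OF v(1), of x]] by blast
qed

section \<open>Reflections and the deletion condition\<close>

text \<open>\<open>refl_count M p w r\<close> counts the positions of \<open>w\<close> whose reflection (the letter conjugated
  by the preceding prefix, itself preceded by \<open>p\<close>) equals \<open>r\<close> in \<open>W\<close>.  Its parity only depends
  on the element represented by \<open>w\<close>; this is Tits' route to the deletion condition.\<close>

fun refl_count :: "('s \<Rightarrow> 's \<Rightarrow> nat) \<Rightarrow> 's list \<Rightarrow> 's list \<Rightarrow> 's list \<Rightarrow> nat" where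
  "refl_count M p [] r = 0"
| "refl_count M p (x#w) r = (if weq M (p@[x]@rev p) r then 1 else 0) + refl_count M (p@[x]) w r"

lemma refl_count_append: "refl_count M p (u@v) r = refl_count M p u r + refl_count M (p@u) v r"
  by (induction u arbitrary: p) auto

lemma refl_count_weq_prefix: "weq M p p' \<Longrightarrow> refl_count M p w r = refl_count M p' w r"
proof (induction w arbitrary: p p')
  case Nil then show ?case by simp
next
  case (Cons x w)
  have "weq M (p@[x]@rev p) (p'@[x]@rev p')"
    using weq_append[OF Cons.prems weq_Cons[OF weq_rev[OF Cons.prems], of x]] by simp
  moreover have "weq M (p@[x]) (p'@[x])" using weq_append[OF Cons.prems weq_refl] .
  ultimately show ?case using Cons.IH by (auto intro: weq_trans weq_sym)
qed

definition refl_word :: "'s list \<Rightarrow> nat \<Rightarrow> 's list" where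
  "refl_word w i = take i w @ [w!i] @ rev (take i w)"

lemma refl_count_eq_sum: "refl_count M p w r = (\<Sum>i<length w. if weq M (p @ refl_word w i @ rev p) r then 1 else 0)"
proof (induction w arbitrary: p)
  case Nil then show ?case by simp
next
  case (Cons x w)
  show ?case
    unfolding refl_count.simps Cons.IH length_Cons sum.lessThan_Suc_shift
    by (simp add: refl_word_def)
qed

lemma even_refl_count_square: "even (refl_count M p [s,s] r)"
proof -
  have "weq M ((p@[s])@[s]@rev (p@[s])) (p@[s]@rev p)"
    using weq_square_cancel[of M "p@[s]" s "rev p"] by simp
  then have "weq M ((p@[s])@[s]@rev (p@[s])) r = weq M (p@[s]@rev p) r"
    by (meson weq_sym weq_trans)
  then show ?thesis by simp
qed

lemma refl_count_braid:
  assumes "weq M (alt s t m) (alt t s m)"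
  shows "refl_count M p (alt s t m) r = refl_count M p (alt t s m) r"
proof -
  have A: "refl_word (alt s t m) i = alt s t (2*i+1)" if "i < m" for s t i
  proof -
    have "refl_word (alt s t m) i = alt s t i @ [if even i then s else t] @ rev (alt s t i)"
      using that by (simp add: refl_word_def take_alt nth_alt)
    then show ?thesis by (simp only: alt_odd_split)
  qed
  define f where "f i = (if weq M (p @ alt s t (2*i+1) @ rev p) r then 1 else (0::nat))" for i
  define g where "g i = (if weq M (p @ alt t s (2*i+1) @ rev p) r then 1 else (0::nat))" for i
  have "refl_count M p (alt s t m) r = (\<Sum>i<m. f i)"
    unfolding refl_count_eq_sum f_def by (rule sum.cong) (auto simp: A)
  moreover have "refl_count M p (alt t s m) r = (\<Sum>i<m. g i)"
    unfolding refl_count_eq_sum g_def by (rule sum.cong) (auto simp: A)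
  moreover have "(\<Sum>i<m. f i) = (\<Sum>i<m. g (m - Suc i))"
  proof (rule sum.cong)
    fix i assume "i \<in> {..<m}"
    then have "weq M (alt s t (2*i+1)) (alt t s (2*(m - Suc i)+1))" using weq_alt_odd_mirror[OF assms] by simp
    then have "weq M (p @ alt s t (2*i+1) @ rev p) (p @ alt t s (2*(m - Suc i)+1) @ rev p)"
      by (rule weq_in_context)
    then show "f i = g (m - Suc i)" unfolding f_def g_def by (meson weq_sym weq_trans)
  qed simp
  moreover have "(\<Sum>i<m. g (m - Suc i)) = (\<Sum>i<m. g i)" by (rule sum.nat_diff_reindex)
  ultimately show ?thesis by simp
qed

lemma cox_step_even_refl_count: "cox_step M u v \<Longrightarrow> even (refl_count M [] u r) = even (refl_count M [] v r)"
proof (induction rule: cox_step.induct)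
  case (cancel p s q)
  have "refl_count M (p@[s,s]) q r = refl_count M p q r"
    by (rule refl_count_weq_prefix) (use weq_square_cancel[of M p s "[]"] in simp)
  then show ?case using even_refl_count_square[of M p s r] by (simp add: refl_count_append)
next
  case (braid s t p q)
  have w: "weq M (alt s t (M s t)) (alt t s (M s t))"
    using cox_step_weq[OF cox_step.braid[OF braid, of M "[]" "[]"]] by simp
  have "refl_count M (p@alt s t (M s t)) q r = refl_count M (p@alt t s (M s t)) q r"
    by (rule refl_count_weq_prefix) (rule weq_append[OF weq_refl w])
  then show ?case using refl_count_braid[OF w, of p r] by (simp add: refl_count_append)
qed

lemma weq_even_refl_count: "weq M u v \<Longrightarrow> even (refl_count M [] u r) = even (refl_count M [] v r)"
  unfolding weq_def
proof (induction rule: equivclp_induct)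
  case base then show ?case by simp
next
  case (step y z) then show ?case using cox_step_even_refl_count by metis
qed

definition del_pair :: "nat \<Rightarrow> nat \<Rightarrow> 's list \<Rightarrow> 's list" where
  "del_pair i j w = take i w @ take (j - Suc i) (drop (Suc i) w) @ drop (Suc j) w"

lemma length_del_pair: "i < j \<Longrightarrow> j < length w \<Longrightarrow> length (del_pair i j w) = length w - 2"
  unfolding del_pair_def by auto

lemma set_del_pair: "set (del_pair i j w) \<subseteq> set w"
  unfolding del_pair_def using set_take_subset set_drop_subset
  by (metis Un_least in_set_dropD in_set_takeD set_append subsetI)

lemma split_at_two:
  assumes "i < j" "j < length w"
  shows "w = take i w @ [w!i] @ take (j - Suc i) (drop (Suc i) w) @ [w!j] @ drop (Suc j) w"
    and "take j w = take i w @ [w!i] @ take (j - Suc i) (drop (Suc i) w)"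
proof -
  have d: "drop (Suc i) w = take (j - Suc i) (drop (Suc i) w) @ drop j w"
    using assms by (metis Suc_leI append_take_drop_id drop_drop le_add_diff_inverse2)
  have dj: "drop j w = w!j # drop (Suc j) w" using assms by (simp add: Cons_nth_drop_Suc)
  have w: "w = take i w @ w!i # drop (Suc i) w" using assms by (simp add: id_take_nth_drop)
  show "w = take i w @ [w!i] @ take (j - Suc i) (drop (Suc i) w) @ [w!j] @ drop (Suc j) w"
    using w d dj by (metis append_Cons append_Nil)
  have "take j w = take (Suc i + (j - Suc i)) w" using assms by simp
  also have "\<dots> = take (Suc i) w @ take (j - Suc i) (drop (Suc i) w)" by (rule take_add)
  also have "take (Suc i) w = take i w @ [w!i]" using assms by (simp add: take_Suc_conv_app_nth)
  finally show "take j w = take i w @ [w!i] @ take (j - Suc i) (drop (Suc i) w)" by simp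
qed

lemma weq_del_pair:
  assumes ij: "i < j" "j < length w" and e: "weq M (refl_word w i) (refl_word w j)"
  shows "weq M w (del_pair i j w)"
proof -
  define p where "p = take i w"
  define a where "a = w!i"
  define q where "q = take (j - Suc i) (drop (Suc i) w)"
  define b where "b = w!j"
  define r where "r = drop (Suc j) w"
  have w: "w = p @ [a] @ q @ [b] @ r" using split_at_two(1)[OF ij] unfolding p_def a_def q_def b_def r_def .
  have tj: "take j w = p @ [a] @ q" using split_at_two(2)[OF ij] unfolding p_def a_def q_def .
  have ri: "refl_word w i = p @ ([a] @ rev p)" unfolding refl_word_def p_def a_def by simp
  have rj: "refl_word w j = p @ ([a] @ q @ [b] @ rev q @ [a] @ rev p)" unfolding refl_word_def tj b_def by simp
  have "weq M ([a] @ rev p) ([a] @ q @ [b] @ rev q @ [a] @ rev p)"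
    using e unfolding ri rj by (rule weq_append_cancel_left)
  then have "weq M ([a] @ rev p) (([a] @ q @ [b] @ rev q @ [a]) @ rev p)" by simp
  then have "weq M ([a] @ []) ([a] @ (q @ [b] @ rev q @ [a]))"
    using weq_append_cancel_right[of M "[a]" "rev p"] by simp
  then have "weq M [] (q @ [b] @ rev q @ [a])" by (rule weq_append_cancel_left)
  then have "weq M ((q @ [b]) @ (rev q @ [a])) []" by (simp add: weq_sym)
  then have "weq M (q @ [b]) ([] @ rev (rev q @ [a]))" using weq_append_right_iff by blast
  then have qb: "weq M (q @ [b]) ([a] @ q)" by simp
  have "weq M (p @ [a] @ (q @ [b]) @ r) (p @ [a] @ ([a] @ q) @ r)"
    using weq_in_context[OF qb, of "p @ [a]" r] by simp
  moreover have "weq M (p @ [a,a] @ (q @ r)) (p @ (q @ r))" by (rule weq_square_cancel)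
  ultimately have "weq M w (p @ q @ r)" unfolding w by (auto intro: weq_trans)
  moreover have "del_pair i j w = p @ q @ r" unfolding del_pair_def p_def q_def r_def ..
  ultimately show ?thesis by simp
qed

lemma refl_word_occurs:
  assumes u: "weq M w u" and i: "i < length w"
    and uniq: "\<And>k. k < length w \<Longrightarrow> weq M (refl_word w k) (refl_word w i) \<Longrightarrow> k = i"
  shows "\<exists>k<length u. weq M (refl_word u k) (refl_word w i)"
proof -
  have "refl_count M [] w (refl_word w i) = (\<Sum>k<length w. if k = i then 1 else 0)"
    unfolding refl_count_eq_sum
  proof (rule sum.cong)
    fix k assume "k \<in> {..<length w}"
    then have "weq M (refl_word w k) (refl_word w i) \<longleftrightarrow> k = i" using uniq by auto
    then show "(if weq M ([] @ refl_word w k @ rev []) (refl_word w i) then 1 else 0) = (if k = i then 1 else (0::nat))"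
      by simp
  qed simp
  also have "\<dots> = 1" using i by simp
  finally have "odd (refl_count M [] u (refl_word w i))"
    using weq_even_refl_count[OF u, of "refl_word w i"] by simp
  then have "refl_count M [] u (refl_word w i) \<noteq> 0" by (metis odd_pos less_not_refl3)
  then have "\<exists>k\<in>{..<length u}. (if weq M ([] @ refl_word u k @ rev []) (refl_word w i) then 1 else 0) \<noteq> (0::nat)"
    unfolding refl_count_eq_sum by (rule sum.not_neutral_contains_not_neutral) blast
  then show ?thesis by (auto split: if_splits)
qed

lemma refl_word_repeat:
  assumes "wlen M w < length w"
  shows "\<exists>i j. i < j \<and> j < length w \<and> weq M (refl_word w i) (refl_word w j)"
proof (rule ccontr)
  assume no: "\<not> ?thesis"
  have uniq: "k = i" if "i < length w" "k < length w" "weq M (refl_word w k) (refl_word w i)" for i k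
    using no that weq_sym by (metis linorder_neqE_nat)
  obtain u where u: "weq M w u" "length u = wlen M w" using wlen_attained by blast
  define f where "f i = (SOME k. k < length u \<and> weq M (refl_word u k) (refl_word w i))" for i
  have f: "f i < length u \<and> weq M (refl_word u (f i)) (refl_word w i)" if "i < length w" for i
    unfolding f_def using someI_ex[OF refl_word_occurs[OF u(1) that uniq[OF that]]] by blast
  have "inj_on f {..<length w}"
  proof (rule inj_onI)
    fix i i' assume "i \<in> {..<length w}" "i' \<in> {..<length w}" "f i = f i'"
    then show "i = i'" using f[of i] f[of i'] uniq[of i i'] by (metis lessThan_iff weq_sym weq_trans)
  qed
  moreover have "f ` {..<length w} \<subseteq> {..<length u}" using f by auto
  ultimately have "card {..<length w} \<le> card {..<length u}" by (rule card_inj_on_le) simp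
  then show False using assms u by simp
qed

lemma deletion_condition:
  assumes "wlen M w < length w"
  shows "\<exists>i j. i < j \<and> j < length w \<and> weq M w (del_pair i j w)"
  using refl_word_repeat[OF assms] weq_del_pair by blast

lemma exists_reduced_subword: "\<exists>u. weq M w u \<and> reduced M u \<and> set u \<subseteq> set w"
proof (induction "length w" arbitrary: w rule: less_induct)
  case less
  show ?case
  proof (cases "reduced M w")
    case True then show ?thesis by (intro exI[of _ w]) auto
  next
    case False
    then have "wlen M w < length w" by (simp add: not_reduced_iff)
    then obtain i j where ij: "i < j" "j < length w" "weq M w (del_pair i j w)" using deletion_condition by blast
    then have "length (del_pair i j w) < length w" using length_del_pair[of i j w] by simp
    then obtain u where "weq M (del_pair i j w) u" "reduced M u" "set u \<subseteq> set (del_pair i j w)" using less by blast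
    then show ?thesis using ij set_del_pair by (meson dual_order.trans weq_trans)
  qed
qed

lemma exchange_condition:
  assumes red: "reduced M u" and nr: "\<not> reduced M (s#u)"
  shows "\<exists>j < length u. weq M (s#u) (take j u @ drop (Suc j) u)"
proof -
  obtain i j where ij: "i < j" "j < length (s#u)" "weq M (s#u) (del_pair i j (s#u))"
    using deletion_condition[of M "s#u"] nr by (auto simp: not_reduced_iff)
  obtain j' where j': "j = Suc j'" using ij by (cases j) auto
  show ?thesis
  proof (cases i)
    case 0
    have "del_pair i j (s#u) = take j' u @ drop (Suc j') u"
      unfolding 0 j' del_pair_def by simp
    then show ?thesis using ij j' by (intro exI[of _ j']) auto
  next
    case (Suc i')
    have "del_pair i j (s#u) = [s] @ del_pair i' j' u"
      unfolding Suc j' del_pair_def by simp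
    then have "weq M ([s] @ u) ([s] @ del_pair i' j' u)" using ij by simp
    then have "weq M u (del_pair i' j' u)" by (rule weq_append_cancel_left)
    moreover have "i' < j'" "j' < length u" using ij Suc j' by auto
    ultimately have "wlen M u \<le> length u - 2" using wlen_le length_del_pair[of i' j' u] by fastforce
    moreover have "length u \<ge> 1" using ij Suc j' by simp
    ultimately show ?thesis using red unfolding reduced_def by simp
  qed
qed

section \<open>The geometric representation\<close>

lemma two_cos_sin: fixes a y :: real shows "2 * cos a * sin y = sin (y + a) + sin (y - a)"
  by (simp add: sin_add sin_diff algebra_simps)

lemma chebyshev_closed_form:
  fixes x :: "nat \<Rightarrow> real"
  assumes rec: "\<And>k. x (k+2) = 2 * cos th * x (k+1) - x k"
  shows "x k * sin th = sin (real k * th) * x 1 - sin ((real k - 1) * th) * x 0"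
proof (induction k rule: less_induct)
  case (less k)
  show ?case
  proof (cases k)
    case 0 then show ?thesis by (simp add: algebra_simps)
  next
    case (Suc k1)
    show ?thesis
    proof (cases k1)
      case 0 then show ?thesis using Suc by simp
    next
      case (Suc k2)
      have k: "k = k2 + 2" using \<open>k = Suc k1\<close> Suc by simp
      have I1: "x (k2+1) * sin th = sin (real (k2+1) * th) * x 1 - sin ((real (k2+1) - 1) * th) * x 0"
        using less[of "k2+1"] k by simp
      have I0: "x k2 * sin th = sin (real k2 * th) * x 1 - sin ((real k2 - 1) * th) * x 0"
        using less[of k2] k by simp
      have "x k * sin th = 2 * cos th * (x (k2+1) * sin th) - x k2 * sin th"
        unfolding k rec by (simp add: algebra_simps)
      also have "\<dots> = (2 * cos th * sin (real (k2+1) * th) - sin (real k2 * th)) * x 1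
          - (2 * cos th * sin (real k2 * th) - sin ((real k2 - 1) * th)) * x 0"
        unfolding I1 I0 by (simp add: algebra_simps)
      also have "2 * cos th * sin (real (k2+1) * th) - sin (real k2 * th) = sin (real k * th)"
        unfolding two_cos_sin k by (simp add: algebra_simps)
      also have "2 * cos th * sin (real k2 * th) - sin ((real k2 - 1) * th) = sin ((real k - 1) * th)"
        unfolding two_cos_sin k by (simp add: algebra_simps)
      finally show ?thesis .
    qed
  qed
qed

lemma chebyshev_periodic:
  fixes x :: "nat \<Rightarrow> real" and m :: nat
  assumes rec: "\<And>k. x (k+2) = 2 * cos (2*pi/m) * x (k+1) - x k" and m: "m \<ge> 3"
  shows "x m = x 0"
proof -
  define th where "th = 2*pi/m"
  have th: "0 < th" "th < pi" using m by (auto simp: th_def field_simps)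
  have s: "sin th > 0" using sin_gt_zero th by blast
  have "x m * sin th = sin (real m * th) * x 1 - sin ((real m - 1) * th) * x 0"
    by (rule chebyshev_closed_form) (use rec th_def in simp)
  also have mt: "real m * th = 2 * pi" using m by (simp add: th_def)
  also have "(real m - 1) * th = 2*pi - th" using mt by (simp add: left_diff_distrib)
  finally have "x m * sin th = x 0 * sin th" by simp
  then show ?thesis using s by simp
qed

lemma chebyshev_period_sum:
  fixes x :: "nat \<Rightarrow> real" and m :: nat
  assumes rec: "\<And>k. x (k+2) = 2 * cos (2*pi/m) * x (k+1) - x k" and m: "m \<ge> 3"
  shows "(\<Sum>k<m. x k) = 0"
proof -
  define C where "C = cos (2*pi/m)"
  have p0: "x m = x 0" by (rule chebyshev_periodic[OF rec m])
  have p1: "x (m+1) = x 1" using chebyshev_periodic[of "\<lambda>k. x (k+1)" m] rec m by (simp add: add.commute)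
  define S where "S = (\<Sum>k<m. x k)"
  have g: "(\<Sum>k<n. y (k+1)) = (\<Sum>k<n. y k) - y 0 + y n" for y :: "nat \<Rightarrow> real" and n
    by (induction n) (simp_all add: sum.lessThan_Suc)
  have S1: "(\<Sum>k<m. x (k+1)) = S" unfolding S_def g p0 by simp
  have S2: "(\<Sum>k<m. x (k+2)) = S"
    using g[of "\<lambda>k. x (k+1)" m] S1 p1 by (simp add: numeral_2_eq_2)
  have "(\<Sum>k<m. x (k+2)) = 2 * C * (\<Sum>k<m. x (k+1)) - S"
    unfolding S_def C_def rec by (simp add: sum_subtractf sum_distrib_left)
  then have "S = 2 * C * S - S" using S1 S2 by simp
  then have "(2 - 2*C) * S = 0" by (simp add: algebra_simps)
  moreover have "C < 1"
  proof -
    have "cos (2*pi/m) < cos 0" by (rule cos_monotone_0_pi) (use m in \<open>auto simp: field_simps\<close>)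
    then show ?thesis by (simp add: C_def)
  qed
  ultimately show ?thesis by (simp add: S_def)
qed

lemma rotation_orbit_sums_zero:
  fixes A B :: "nat \<Rightarrow> real" and m :: nat
  defines "c \<equiv> cos (pi / real m)"
  assumes m2: "m \<ge> 2"
    and A1: "\<And>k. A (Suc k) = - (A k + 2*c*B k)"
    and B1: "\<And>k. B (Suc k) = 2*c*A k + (4*c^2 - 1) * B k"
  shows "(\<Sum>j<m. A j) = 0 \<and> (\<Sum>j<m. B j) = 0"
proof (cases "m = 2")
  case True
  then have "c = 0" by (simp add: c_def)
  then show ?thesis using True A1[of 0] B1[of 0] by (simp add: numeral_2_eq_2)
next
  case False
  then have m3: "m \<ge> 3" using m2 by simp
  have C: "cos (2*pi/m) = 2*c^2 - 1" unfolding c_def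
    using cos_double_cos[of "pi / real m"] by (simp add: mult.assoc)
  have rA: "A (k+2) = 2 * cos (2*pi/m) * A (k+1) - A k" for k
  proof -
    have "A (k+2) = - (A (Suc k) + 2*c*B (Suc k))" using A1[of "Suc k"] by (simp add: numeral_2_eq_2)
    also have "\<dots> = - (- (A k + 2*c*B k) + 2*c*(2*c*A k + (4*c^2 - 1) * B k))"
      by (simp only: A1 B1)
    also have "\<dots> = 2 * (2*c^2 - 1) * (- (A k + 2*c*B k)) - A k"
      by (simp add: algebra_simps power2_eq_square)
    also have "\<dots> = 2 * cos (2*pi/m) * A (k+1) - A k" by (simp only: C A1 Suc_eq_plus1[symmetric])
    finally show ?thesis .
  qed
  have rB: "B (k+2) = 2 * cos (2*pi/m) * B (k+1) - B k" for k
  proof -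
    have "B (k+2) = 2*c*A (Suc k) + (4*c^2 - 1) * B (Suc k)" using B1[of "Suc k"] by (simp add: numeral_2_eq_2)
    also have "\<dots> = 2*c*(- (A k + 2*c*B k)) + (4*c^2 - 1) * (2*c*A k + (4*c^2 - 1) * B k)"
      by (simp only: A1 B1)
    also have "\<dots> = 2 * (2*c^2 - 1) * (2*c*A k + (4*c^2 - 1) * B k) - B k"
      by (simp add: algebra_simps power2_eq_square power4_eq_xxxx)
    also have "\<dots> = 2 * cos (2*pi/m) * B (k+1) - B k" by (simp only: C B1 Suc_eq_plus1[symmetric])
    finally show ?thesis .
  qed
  show ?thesis using chebyshev_period_sum[OF rA m3] chebyshev_period_sum[OF rB m3] by simp
qed

definition cos_form :: "('s \<Rightarrow> 's \<Rightarrow> nat) \<Rightarrow> 's \<Rightarrow> 's \<Rightarrow> real" where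
  "cos_form M s u = - cos (pi / real (M s u))"

definition basis_vec :: "'s \<Rightarrow> 's \<Rightarrow> real" where
  "basis_vec t u = (if u = t then 1 else 0)"

definition tits_form :: "('s \<Rightarrow> 's \<Rightarrow> nat) \<Rightarrow> 's \<Rightarrow> ('s::finite \<Rightarrow> real) \<Rightarrow> real" where
  "tits_form M s v = (\<Sum>u\<in>UNIV. cos_form M s u * v u)"

definition tits_refl :: "('s \<Rightarrow> 's \<Rightarrow> nat) \<Rightarrow> 's \<Rightarrow> ('s::finite \<Rightarrow> real) \<Rightarrow> ('s \<Rightarrow> real)" where
  "tits_refl M s v = (\<lambda>u. v u - 2 * tits_form M s v * basis_vec s u)"

definition tits_word :: "('s \<Rightarrow> 's \<Rightarrow> nat) \<Rightarrow> 's list \<Rightarrow> ('s::finite \<Rightarrow> real) \<Rightarrow> ('s \<Rightarrow> real)" where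
  "tits_word M w v = foldr (tits_refl M) w v"

lemma tits_form_basis: "tits_form M s (basis_vec t) = cos_form M s t"
  unfolding tits_form_def basis_vec_def by (simp add: if_distrib cong: if_cong)

lemma tits_form_diff2: "tits_form M r (\<lambda>u. v u - 2 * (p * basis_vec t u + q * basis_vec s u)) = tits_form M r v - 2 * p * cos_form M r t - 2 * q * cos_form M r s"
proof -
  have "tits_form M r (\<lambda>u. v u - 2 * (p * basis_vec t u + q * basis_vec s u))
      = tits_form M r v - 2 * p * tits_form M r (basis_vec t) - 2 * q * tits_form M r (basis_vec s)"
    unfolding tits_form_def by (simp add: algebra_simps sum_subtractf sum.distrib sum_distrib_left)
  then show ?thesis by (simp add: tits_form_basis)
qed

lemma tits_form_diff: "tits_form M r (\<lambda>u. v u - 2 * p * basis_vec s u) = tits_form M r v - 2 * p * cos_form M r s"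
  using tits_form_diff2[of M r v 0 s p s] by (simp add: algebra_simps)

lemma cos_form_diag: "coxeter_matrix M \<Longrightarrow> cos_form M s s = 1"
  unfolding coxeter_matrix_def cos_form_def by simp

lemma cos_form_sym: "coxeter_matrix M \<Longrightarrow> cos_form M s t = cos_form M t s"
  unfolding coxeter_matrix_def cos_form_def by metis

lemma tits_refl_involution: assumes "coxeter_matrix M" shows "tits_refl M s (tits_refl M s v) = v"
proof -
  have "tits_form M s (tits_refl M s v) = - tits_form M s v"
    unfolding tits_refl_def tits_form_diff cos_form_diag[OF assms] by simp
  then show ?thesis unfolding tits_refl_def[of M s "tits_refl M s v"] by (simp add: tits_refl_def algebra_simps)
qed

lemma tits_word_Nil[simp]: "tits_word M [] v = v" by (simp add: tits_word_def)
lemma tits_word_Cons[simp]: "tits_word M (s#w) v = tits_refl M s (tits_word M w v)" by (simp add: tits_word_def)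
lemma tits_word_append: "tits_word M (u@w) v = tits_word M u (tits_word M w v)" by (simp add: tits_word_def)

lemma tits_word_rev_inverse: assumes "coxeter_matrix M" shows "tits_word M (rev w) (tits_word M w v) = v"
  by (induction w arbitrary: v) (simp_all add: tits_word_append tits_refl_involution[OF assms])

lemma tits_refl_comp:
  "tits_refl M s (tits_refl M t y) = (\<lambda>u. y u - 2 * (tits_form M t y * basis_vec t u
    + (tits_form M s y + 2 * cos (pi / real (M s t)) * tits_form M t y) * basis_vec s u))"
proof -
  have "tits_form M s (tits_refl M t y) = tits_form M s y + 2 * cos (pi / real (M s t)) * tits_form M t y"
    unfolding tits_refl_def tits_form_diff cos_form_def by simp
  then show ?thesis unfolding tits_refl_def[of M s] unfolding tits_refl_def by (simp add: algebra_simps)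
qed

lemma tits_word_dihedral_period:
  assumes cox: "coxeter_matrix M" and st: "s \<noteq> t"
  shows "tits_word M (alt s t (2 * M s t)) v = v"
proof -
  define m where "m = M s t"
  have m2: "m \<ge> 2" using cox st unfolding coxeter_matrix_def m_def by blast
  define c where "c = cos (pi / real m)"
  have Bst: "cos_form M s t = - c" "cos_form M t s = - c" using cos_form_sym[OF cox, of s t]
    unfolding c_def m_def cos_form_def by auto
  have Bss: "cos_form M s s = 1" "cos_form M t t = 1" using cos_form_diag[OF cox] by auto
  define T where "T y = tits_refl M s (tits_refl M t y)" for y
  have Tf: "T y = (\<lambda>u. y u - 2 * (tits_form M t y * basis_vec t u + (tits_form M s y + 2*c*tits_form M t y) * basis_vec s u))" for y
    unfolding T_def c_def m_def by (rule tits_refl_comp)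
  have TA: "tits_form M s (T y) = - (tits_form M s y + 2*c*tits_form M t y)" for y
    unfolding Tf tits_form_diff2 Bst Bss by (simp add: algebra_simps)
  have TB: "tits_form M t (T y) = 2*c*tits_form M s y + (4*c^2 - 1) * tits_form M t y" for y
    unfolding Tf tits_form_diff2 Bst Bss by (simp add: algebra_simps power2_eq_square)
  have rwT: "tits_word M (alt s t (2*k)) v = (T^^k) v" for k
  proof (induction k)
    case 0 then show ?case by simp
  next
    case (Suc k)
    have "alt s t (2 * Suc k) = s # t # alt s t (2*k)" by (simp add: numeral_2_eq_2)
    then show ?case using Suc by (simp add: T_def)
  qed
  \<comment> \<open>\<open>T\<close> only moves \<open>v\<close> along \<open>e\<^sub>s\<close> and \<open>e\<^sub>t\<close>; the coefficients of these moves satisfy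
    a Chebyshev recurrence of period \<open>m\<close>, so after \<open>m\<close> steps they add up to zero.\<close>
  define A where "A k = tits_form M s ((T^^k) v)" for k
  define B where "B k = tits_form M t ((T^^k) v)" for k
  have Tk: "(T^^k) v = (\<lambda>u. v u - 2 * (\<Sum>j<k. B j * basis_vec t u + (A j + 2*c*B j) * basis_vec s u))" for k
  proof (induction k)
    case 0 then show ?case by simp
  next
    case (Suc k)
    have "(T^^Suc k) v = T ((T^^k) v)" by simp
    also have "\<dots> = (\<lambda>u. (T^^k) v u - 2 * (B k * basis_vec t u + (A k + 2*c*B k) * basis_vec s u))"
      unfolding Tf A_def B_def ..
    also have "\<dots> = (\<lambda>u. v u - 2 * (\<Sum>j<Suc k. B j * basis_vec t u + (A j + 2*c*B j) * basis_vec s u))"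
      by (subst Suc) (simp add: algebra_simps)
    finally show ?case .
  qed
  have A1: "A (Suc k) = - (A k + 2*c*B k)" for k unfolding A_def B_def by (simp add: TA)
  have B1: "B (Suc k) = 2*c*A k + (4*c^2 - 1) * B k" for k unfolding A_def B_def by (simp add: TB)
  have sums: "(\<Sum>j<m. A j) = 0 \<and> (\<Sum>j<m. B j) = 0"
    using rotation_orbit_sums_zero[OF m2] A1 B1 unfolding c_def by blast
  have "(T^^m) v = v"
  proof -
    have "(\<Sum>j<m. B j * basis_vec t u + (A j + 2*c*B j) * basis_vec s u)
        = (\<Sum>j<m. B j) * basis_vec t u + ((\<Sum>j<m. A j) + 2*c*(\<Sum>j<m. B j)) * basis_vec s u" for u
      by (simp add: sum.distrib sum_distrib_left sum_distrib_right algebra_simps)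
    then show ?thesis unfolding Tk using sums by simp
  qed
  then show ?thesis using rwT m_def by simp
qed

lemma tits_word_braid:
  assumes cox: "coxeter_matrix M" and st: "s \<noteq> t"
  shows "tits_word M (alt s t (M s t)) x = tits_word M (alt t s (M s t)) x"
proof -
  define m where "m = M s t"
  have e: "alt s t (2*m) = alt s t m @ rev (alt t s m)"
    using alt_add[of s t m m] rev_alt[of t s m] by (simp add: mult_2)
  have "tits_word M (alt s t m) x = tits_word M (alt s t m) (tits_word M (rev (alt t s m)) (tits_word M (alt t s m) x))"
    using tits_word_rev_inverse[OF cox] by simp
  also have "\<dots> = tits_word M (alt s t (2*m)) (tits_word M (alt t s m) x)" unfolding e tits_word_append ..
  also have "\<dots> = tits_word M (alt t s m) x" using tits_word_dihedral_period[OF cox st] m_def by simp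
  finally show ?thesis unfolding m_def .
qed

lemma cox_step_tits_word: assumes cox: "coxeter_matrix M" shows "cox_step M u v \<Longrightarrow> tits_word M u x = tits_word M v x"
proof (induction arbitrary: x rule: cox_step.induct)
  case (cancel p s q) then show ?case by (simp add: tits_word_append tits_refl_involution[OF cox])
next
  case (braid s t p q) then show ?case using tits_word_braid[OF cox braid.hyps] by (simp add: tits_word_append)
qed

lemma weq_tits_word: assumes cox: "coxeter_matrix M" and "weq M u v" shows "tits_word M u x = tits_word M v x"
  using assms(2) unfolding weq_def
proof (induction rule: equivclp_induct)
  case base then show ?case by simp
next
  case (step y z) then show ?case using cox_step_tits_word[OF cox] by metis
qed

lemma weq_singleton_imp_mem:
  fixes M :: "'s::finite \<Rightarrow> 's \<Rightarrow> nat"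
  assumes cox: "coxeter_matrix M" and w: "weq M [s] v"
  shows "s \<in> set v"
proof (rule ccontr)
  \<comment> \<open>\<open>s\<close> negates \<open>e\<^sub>s\<close>, whereas every other generator fixes the \<open>s\<close>-coordinate.\<close>
  assume ns: "s \<notin> set v"
  have "s \<notin> set v \<Longrightarrow> tits_word M v (basis_vec s) s = 1" for v
    by (induction v) (auto simp: tits_refl_def basis_vec_def)
  then have "tits_word M v (basis_vec s) s = 1" using ns by blast
  moreover have "tits_word M [s] (basis_vec s) s = -1"
    by (simp add: tits_refl_def tits_form_basis cos_form_diag[OF cox] basis_vec_def)
  moreover have "tits_word M [s] (basis_vec s) = tits_word M v (basis_vec s)" by (rule weq_tits_word[OF cox w])
  ultimately show False by simp
qed

section \<open>Parabolic subgroups\<close>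

lemma reduced_weq_set_subset:
  fixes M :: "'s::finite \<Rightarrow> 's \<Rightarrow> nat"
  assumes cox: "coxeter_matrix M"
  shows "reduced M w \<Longrightarrow> weq M w v \<Longrightarrow> set v \<subseteq> I \<Longrightarrow> set w \<subseteq> I"
proof (induction w arbitrary: v)
  case Nil then show ?case by simp
next
  case (Cons s w')
  obtain u where u: "weq M v u" "reduced M u" "set u \<subseteq> set v" using exists_reduced_subword[of M v] by blast
  have su: "weq M (s#w') u" using Cons.prems(2) u(1) by (rule weq_trans)
  have lu: "length u = length (s#w')"
    using wlen_weq[OF su] u(2) Cons.prems(1) unfolding reduced_def by linarith
  have "weq M (s#u) w'" using weq_trans[OF weq_Cons[OF weq_sym[OF su]] weq_Cons_Cons] .
  then have "wlen M (s#u) \<le> length w'" by (rule wlen_le)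
  moreover have "length (s#u) = Suc (length u)" "length (s#w') = Suc (length w')" by simp_all
  ultimately have nr: "\<not> reduced M (s#u)" using lu unfolding reduced_def by linarith
  obtain j where j: "j < length u" "weq M (s#u) (take j u @ drop (Suc j) u)"
    using exchange_condition[OF u(2) nr] by blast
  define u' where "u' = take j u @ drop (Suc j) u"
  have su': "set u' \<subseteq> I" unfolding u'_def using u(3) Cons.prems(3)
    using set_take_subset[of j u] set_drop_subset[of "Suc j" u] by auto
  have "weq M w' (s#s#w')" using weq_sym[OF weq_Cons_Cons] .
  also have "weq M (s#s#w') (s#u)" using weq_Cons[OF su] .
  also have "weq M (s#u) u'" using j(2) unfolding u'_def .
  finally have w'u': "weq M w' u'" .
  have "reduced M w'" using reduced_appendD(2)[of M "[s]" w'] Cons.prems(1) by simp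
  then have "set w' \<subseteq> I" using Cons.IH[OF _ w'u' su'] by blast
  moreover have "s \<in> I"
  proof -
    have "weq M ([s]@u) u'" using j(2) unfolding u'_def by simp
    then have "weq M [s] (u' @ rev u)" using weq_append_right_iff by blast
    then have "s \<in> set (u' @ rev u)" by (rule weq_singleton_imp_mem[OF cox])
    then show ?thesis using su' u(3) Cons.prems(3) by auto
  qed
  ultimately show ?case by simp
qed

definition del_at :: "nat \<Rightarrow> 's list \<Rightarrow> 's list" where
  "del_at i w = take i w @ drop (Suc i) w"

lemma del_pair_del_at: "i < j \<Longrightarrow> del_pair i j w = del_at i (del_at j w)"
  unfolding del_pair_def del_at_def by (simp add: drop_take min_def)

lemma del_at_append_split:
  assumes "i < length (j@k)"
  shows "\<exists>j1 k1. del_at i (j@k) = j1@k1 \<and> set j1 \<subseteq> set j \<and> set k1 \<subseteq> set k \<and> length j1 + length k1 + 1 = length j + length k"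
proof (cases "i < length j")
  case True
  show ?thesis
    using True by (intro exI[of _ "del_at i j"] exI[of _ k]) (auto simp: del_at_def dest: in_set_takeD in_set_dropD)
next
  case False
  show ?thesis
    using False assms by (intro exI[of _ j] exI[of _ "del_at (i - length j) k"])
      (auto simp: del_at_def Suc_diff_le dest: in_set_takeD in_set_dropD)
qed

lemma parabolic_intersection:
  fixes M :: "'s::finite \<Rightarrow> 's \<Rightarrow> nat"
  assumes cox: "coxeter_matrix M"
  shows "weq M x (j@k) \<Longrightarrow> set j \<subseteq> J \<Longrightarrow> set k \<subseteq> K \<Longrightarrow> weq M x h \<Longrightarrow> set h \<subseteq> I
    \<Longrightarrow> \<exists>j' k'. weq M x (j'@k') \<and> set j' \<subseteq> I \<inter> J \<and> set k' \<subseteq> I \<inter> K"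
proof (induction "length j + length k" arbitrary: j k rule: less_induct)
  case less
  show ?case
  proof (cases "reduced M (j@k)")
    case True
    have "weq M (j@k) h" using less.prems(1,4) by (meson weq_sym weq_trans)
    then have "set (j@k) \<subseteq> I" using reduced_weq_set_subset[OF cox True] less.prems(5) by blast
    then show ?thesis using less.prems by (intro exI[of _ j] exI[of _ k]) auto
  next
    case False
    then obtain i i2 where ii: "i < i2" "i2 < length (j@k)" "weq M (j@k) (del_pair i i2 (j@k))"
      using deletion_condition[of M "j@k"] by (auto simp: not_reduced_iff)
    obtain j1 k1 where 1: "del_at i2 (j@k) = j1@k1" "set j1 \<subseteq> set j" "set k1 \<subseteq> set k"
      "length j1 + length k1 + 1 = length j + length k"
      using del_at_append_split[OF ii(2)] by blast
    have "i < length (j1@k1)" using ii 1(4) by simp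
    then obtain j2 k2 where 2: "del_at i (j1@k1) = j2@k2" "set j2 \<subseteq> set j1" "set k2 \<subseteq> set k1"
      "length j2 + length k2 + 1 = length j1 + length k1"
      using del_at_append_split[OF \<open>i < length (j1@k1)\<close>] by blast
    have e: "weq M x (j2@k2)" using less.prems(1) ii(3) unfolding del_pair_del_at[OF ii(1)] 1(1) 2(1)
      by (rule weq_trans)
    show ?thesis
      by (rule less.hyps[of j2 k2]) (use 1 2 less.prems e in auto)
  qed
qed

section \<open>Buildings as W-metric spaces\<close>

locale building =
  fixes M :: "'s \<Rightarrow> 's \<Rightarrow> nat" and Ch :: "'c set" and \<delta> :: "'c \<Rightarrow> 'c \<Rightarrow> 's list"
  assumes bldg: "W_building M Ch \<delta>"
begin

lemma delta_Nil_iff: "x \<in> Ch \<Longrightarrow> y \<in> Ch \<Longrightarrow> weq M (\<delta> x y) [] \<longleftrightarrow> x = y"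
  using bldg unfolding W_building_def by blast

lemma delta_self: "x \<in> Ch \<Longrightarrow> weq M (\<delta> x x) []"
  using delta_Nil_iff by blast

lemma delta_panel_cases: "x \<in> Ch \<Longrightarrow> y \<in> Ch \<Longrightarrow> x' \<in> Ch \<Longrightarrow> weq M (\<delta> x' x) [s] \<Longrightarrow>
    weq M (\<delta> x' y) (s # \<delta> x y) \<or> weq M (\<delta> x' y) (\<delta> x y)"
  using bldg unfolding W_building_def by blast

lemma delta_panel_longer: "x \<in> Ch \<Longrightarrow> y \<in> Ch \<Longrightarrow> x' \<in> Ch \<Longrightarrow> weq M (\<delta> x' x) [s] \<Longrightarrow>
    wlen M (s # \<delta> x y) = Suc (wlen M (\<delta> x y)) \<Longrightarrow> weq M (\<delta> x' y) (s # \<delta> x y)"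
  using bldg unfolding W_building_def by blast

lemma delta_panel_exists: "x \<in> Ch \<Longrightarrow> y \<in> Ch \<Longrightarrow> \<exists>x'\<in>Ch. weq M (\<delta> x' x) [s] \<and> weq M (\<delta> x' y) (s # \<delta> x y)"
  using bldg unfolding W_building_def by blast

lemma delta_weq_Nil_imp_eq: "x \<in> Ch \<Longrightarrow> y \<in> Ch \<Longrightarrow> weq M (\<delta> x y) w \<Longrightarrow> weq M w [] \<Longrightarrow> x = y"
  using delta_Nil_iff weq_trans by blast

lemma delta_ConsE:
  assumes "x \<in> Ch" "y \<in> Ch" "weq M (\<delta> y x) (s # w)"
  obtains u where "u \<in> Ch" "weq M (\<delta> u y) [s]" "weq M (\<delta> u x) w"
proof -
  obtain u where u: "u \<in> Ch" "weq M (\<delta> u y) [s]" "weq M (\<delta> u x) (s # \<delta> y x)"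
    using delta_panel_exists[OF assms(2,1)] by blast
  have "weq M (\<delta> u x) (s # s # w)" using weq_trans[OF u(3) weq_Cons[OF assms(3)]] .
  then have "weq M (\<delta> u x) w" by (rule weq_trans[OF _ weq_Cons_Cons])
  with u(1,2) show thesis by (rule that)
qed

lemma delta_sym_reduced:
  assumes x0: "x0 \<in> Ch" and y: "y \<in> Ch"
  shows "x \<in> Ch \<Longrightarrow> weq M (\<delta> x y) v \<Longrightarrow> weq M (\<delta> x x0) (rev u) \<Longrightarrow> reduced M (u@v)
    \<Longrightarrow> weq M (\<delta> y x0) (rev (u@v))"
proof (induction v arbitrary: u x)
  case Nil
  then have "x = y" using delta_Nil_iff[OF Nil.prems(1) y] by simp
  then show ?case using Nil by simp
next
  case (Cons s v')
  obtain x' where x': "x' \<in> Ch" "weq M (\<delta> x' x) [s]" and d1: "weq M (\<delta> x' y) v'"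
    using delta_ConsE[OF y Cons.prems(1) Cons.prems(2)[unfolded append_Cons]] by blast
  have red: "reduced M (u@[s])" using reduced_appendD(1)[of M "u@[s]" v'] Cons.prems(4) by simp
  have l1: "wlen M (s # \<delta> x x0) = wlen M (rev (u@[s]))"
    using wlen_weq[OF weq_Cons[OF Cons.prems(3)]] by simp
  also have "\<dots> = length (u@[s])" using red unfolding reduced_def wlen_rev .
  finally have l1': "wlen M (s # \<delta> x x0) = Suc (length u)" by simp
  have l2: "wlen M (\<delta> x x0) = length u"
    using wlen_weq[OF Cons.prems(3)] reduced_appendD(1)[OF red] unfolding reduced_def wlen_rev by simp
  have "weq M (\<delta> x' x0) (s # \<delta> x x0)"
    by (rule delta_panel_longer[OF Cons.prems(1) x0 x'(1) x'(2)]) (simp add: l1' l2)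
  then have d2: "weq M (\<delta> x' x0) (rev (u@[s]))" using weq_trans[OF _ weq_Cons[OF Cons.prems(3)]] by simp
  have "weq M (\<delta> y x0) (rev ((u@[s])@v'))"
    by (rule Cons.IH[OF x'(1) d1 d2]) (use Cons.prems(4) in simp)
  then show ?case by simp
qed

lemma delta_sym: assumes x: "x \<in> Ch" and y: "y \<in> Ch" shows "weq M (\<delta> y x) (rev (\<delta> x y))"
proof -
  obtain w where w: "weq M (\<delta> x y) w" "length w = wlen M (\<delta> x y)" using wlen_attained by blast
  have r: "reduced M w" using w wlen_weq[OF w(1)] unfolding reduced_def by simp
  have "weq M (\<delta> y x) (rev ([]@w))"
    by (rule delta_sym_reduced[OF x y x w(1)]) (use delta_self[OF x] r in simp_all)
  then show ?thesis using weq_trans[OF _ weq_rev[OF weq_sym[OF w(1)]]] by simp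
qed

definition same_residue :: "'s set \<Rightarrow> 'c \<Rightarrow> 'c \<Rightarrow> bool" where
  "same_residue J x y \<longleftrightarrow> (\<exists>w. weq M (\<delta> x y) w \<and> set w \<subseteq> J)"

lemma same_residue_refl: "x \<in> Ch \<Longrightarrow> same_residue J x x"
  unfolding same_residue_def using delta_self by fastforce

lemma same_residue_sym: assumes "x \<in> Ch" "y \<in> Ch" "same_residue J x y" shows "same_residue J y x"
proof -
  obtain w where w: "weq M (\<delta> x y) w" "set w \<subseteq> J" using assms(3) unfolding same_residue_def by blast
  have "weq M (\<delta> y x) (rev w)" using weq_trans[OF delta_sym[OF assms(1,2)] weq_rev[OF w(1)]] .
  then show ?thesis unfolding same_residue_def using w(2) by (intro exI[of _ "rev w"]) simp
qed

lemma same_residue_mono: "J \<subseteq> K \<Longrightarrow> same_residue J x y \<Longrightarrow> same_residue K x y"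
  unfolding same_residue_def by blast

lemma same_residue_move:
  assumes x: "x \<in> Ch" and z: "z \<in> Ch"
  shows "y \<in> Ch \<Longrightarrow> weq M (\<delta> y z) v \<Longrightarrow> set v \<subseteq> J \<Longrightarrow> same_residue J y x \<Longrightarrow> same_residue J z x"
proof (induction v arbitrary: y)
  case Nil
  then have "y = z" using delta_Nil_iff[OF Nil.prems(1) z] by simp
  then show ?case using Nil by simp
next
  case (Cons s v')
  obtain y' where y': "y' \<in> Ch" "weq M (\<delta> y' y) [s]" and d1: "weq M (\<delta> y' z) v'"
    using delta_ConsE[OF z Cons.prems(1) Cons.prems(2)[unfolded append_Cons]] by blast
  obtain w where w: "weq M (\<delta> y x) w" "set w \<subseteq> J" using Cons.prems(4) unfolding same_residue_def by blast
  have "weq M (\<delta> y' x) (s # \<delta> y x) \<or> weq M (\<delta> y' x) (\<delta> y x)"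
    by (rule delta_panel_cases[OF Cons.prems(1) x y'(1) y'(2)])
  then have "same_residue J y' x"
  proof
    assume "weq M (\<delta> y' x) (s # \<delta> y x)"
    then have "weq M (\<delta> y' x) (s # w)" using weq_trans[OF _ weq_Cons[OF w(1)]] by blast
    then show ?thesis unfolding same_residue_def using w(2) Cons.prems(3) by (intro exI[of _ "s#w"]) auto
  next
    assume "weq M (\<delta> y' x) (\<delta> y x)"
    then show ?thesis unfolding same_residue_def using weq_trans[OF _ w(1)] w(2) by blast
  qed
  then show ?case using Cons.IH[OF y'(1) d1] Cons.prems(3) by simp
qed

lemma same_residue_trans:
  assumes "x \<in> Ch" "y \<in> Ch" "z \<in> Ch" "same_residue J x y" "same_residue J y z"
  shows "same_residue J x z"
proof -
  obtain v where v: "weq M (\<delta> y z) v" "set v \<subseteq> J" using assms(5) unfolding same_residue_def by blast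
  have "same_residue J z x" using same_residue_move[OF assms(1,3,2) v] same_residue_sym[OF assms(1,2,4)] .
  then show ?thesis using same_residue_sym[OF assms(3,1)] by blast
qed

lemma delta_coset_move:
  assumes x0: "x0 \<in> Ch" and z': "z' \<in> Ch"
  shows "y \<in> Ch \<Longrightarrow> weq M (\<delta> y z') v \<Longrightarrow> set v \<subseteq> K \<Longrightarrow> weq M (\<delta> y x0) (k @ g) \<Longrightarrow> set k \<subseteq> K
    \<Longrightarrow> \<exists>k'. set k' \<subseteq> K \<and> weq M (\<delta> z' x0) (k' @ g)"
proof (induction v arbitrary: y k)
  case Nil
  then have "y = z'" using delta_Nil_iff[OF Nil.prems(1) z'] by simp
  then show ?case using Nil by blast
next
  case (Cons s v')
  obtain y' where y': "y' \<in> Ch" "weq M (\<delta> y' y) [s]" and d1: "weq M (\<delta> y' z') v'"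
    using delta_ConsE[OF z' Cons.prems(1) Cons.prems(2)[unfolded append_Cons]] by blast
  have "weq M (\<delta> y' x0) (s # \<delta> y x0) \<or> weq M (\<delta> y' x0) (\<delta> y x0)"
    by (rule delta_panel_cases[OF Cons.prems(1) x0 y'(1) y'(2)])
  then show ?case
  proof
    assume "weq M (\<delta> y' x0) (s # \<delta> y x0)"
    then have A: "weq M (\<delta> y' x0) ((s#k) @ g)" using weq_trans[OF _ weq_Cons[OF Cons.prems(4)]] by simp
    have B: "set (s#k) \<subseteq> K" using Cons.prems(3,5) by simp
    show ?thesis by (rule Cons.IH[OF y'(1) d1 _ A B]) (use Cons.prems(3) in simp)
  next
    assume "weq M (\<delta> y' x0) (\<delta> y x0)"
    then have "weq M (\<delta> y' x0) (k @ g)" using weq_trans[OF _ Cons.prems(4)] by blast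
    then show ?thesis using Cons.IH[OF y'(1) d1] Cons.prems(3,5) by simp
  qed
qed

lemma delta_residue_coset:
  assumes x0: "x0 \<in> Ch" and z: "z \<in> Ch" and z': "z' \<in> Ch" and r: "same_residue K z z'"
  shows "\<exists>k. set k \<subseteq> K \<and> weq M (\<delta> x0 z') (\<delta> x0 z @ k)"
proof -
  obtain v where v: "weq M (\<delta> z z') v" "set v \<subseteq> K" using r unfolding same_residue_def by blast
  obtain k where k: "set k \<subseteq> K" "weq M (\<delta> z' x0) (k @ \<delta> z x0)"
    using delta_coset_move[OF x0 z' z v(1) v(2), of "[]" "\<delta> z x0"] by auto
  have "weq M (\<delta> x0 z') (rev (\<delta> z' x0))" by (rule delta_sym[OF z' x0])
  also have "weq M (rev (\<delta> z' x0)) (rev (k @ \<delta> z x0))" by (rule weq_rev[OF k(2)])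
  also have "rev (k @ \<delta> z x0) = rev (\<delta> z x0) @ rev k" by simp
  also have "weq M (rev (\<delta> z x0) @ rev k) (\<delta> x0 z @ rev k)"
  proof -
    have "weq M (\<delta> z x0) (rev (\<delta> x0 z))" by (rule delta_sym[OF x0 z])
    then have "weq M (rev (\<delta> z x0)) (\<delta> x0 z)" using weq_rev by fastforce
    then show ?thesis by (rule weq_append[OF _ weq_refl])
  qed
  finally show ?thesis using k(1) by (intro exI[of _ "rev k"]) auto
qed

lemma residue_chamber_on_gallery:
  assumes z: "z \<in> Ch"
  shows "x \<in> Ch \<Longrightarrow> weq M (\<delta> x z) (w@p) \<Longrightarrow> set w \<subseteq> J \<Longrightarrow> \<exists>y\<in>Ch. same_residue J x y \<and> weq M (\<delta> y z) p"
proof (induction w arbitrary: x)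
  case Nil then show ?case using same_residue_refl by auto
next
  case (Cons s w')
  obtain x' where x': "x' \<in> Ch" "weq M (\<delta> x' x) [s]" and d1: "weq M (\<delta> x' z) (w' @ p)"
    using delta_ConsE[OF z Cons.prems(1) Cons.prems(2)[unfolded append_Cons]] by blast
  obtain y where y: "y \<in> Ch" "same_residue J x' y" "weq M (\<delta> y z) p" using Cons.IH[OF x'(1) d1] Cons.prems(3) by auto
  have "same_residue J x' x" unfolding same_residue_def using x'(2) Cons.prems(3) by (intro exI[of _ "[s]"]) auto
  then have "same_residue J x x'" using same_residue_sym[OF x'(1) Cons.prems(1)] by blast
  then have "same_residue J x y" using same_residue_trans[OF Cons.prems(1) x'(1) y(1)] y(2) by blast
  then show ?case using y by blast
qed

lemma vert_eq_iff_residue: assumes "x \<in> Ch" "y \<in> Ch"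
  shows "vert M Ch \<delta> s x = vert M Ch \<delta> s y \<longleftrightarrow> same_residue (- {s}) x y"
proof
  assume e: "vert M Ch \<delta> s x = vert M Ch \<delta> s y"
  have "same_residue (-{s}) y y" using same_residue_refl assms by blast
  then have "y \<in> snd (vert M Ch \<delta> s y)" using assms unfolding vert_def same_residue_def by auto
  then have "y \<in> snd (vert M Ch \<delta> s x)" using e by simp
  then show "same_residue (- {s}) x y" unfolding vert_def same_residue_def by auto
next
  assume r: "same_residue (- {s}) x y"
  have "same_residue (-{s}) x z \<longleftrightarrow> same_residue (-{s}) y z" if "z \<in> Ch" for z
  proof
    assume "same_residue (-{s}) x z"
    then show "same_residue (-{s}) y z" using same_residue_trans[OF assms(2,1) that same_residue_sym[OF assms r]] by blast
  next
    assume "same_residue (-{s}) y z"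
    then show "same_residue (-{s}) x z" using same_residue_trans[OF assms that r] by blast
  qed
  then show "vert M Ch \<delta> s x = vert M Ch \<delta> s y" unfolding vert_def same_residue_def by auto
qed

end

locale coxeter_building = building M Ch \<delta>
  for M :: "'s::finite \<Rightarrow> 's \<Rightarrow> nat" and Ch :: "'c set" and \<delta> +
  assumes cox: "coxeter_matrix M"
begin

lemma common_residue_chamber:
  assumes x0: "x0 \<in> Ch" and z: "z \<in> Ch" and z': "z' \<in> Ch"
    and r1: "same_residue I x0 z" and r2: "same_residue J x0 z'" and r3: "same_residue K z z'"
  obtains y where "y \<in> Ch" "same_residue (J \<inter> I) x0 y" "same_residue K y z"
proof -
  obtain k where k: "set k \<subseteq> K" "weq M (\<delta> x0 z') (\<delta> x0 z @ k)"
    using delta_residue_coset[OF x0 z z' r3] by blast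
  obtain g where g: "weq M (\<delta> x0 z) g" "set g \<subseteq> I" using r1 unfolding same_residue_def by blast
  obtain h where h: "weq M (\<delta> x0 z') h" "set h \<subseteq> J" using r2 unfolding same_residue_def by blast
  have "weq M (\<delta> x0 z') (g @ k)" using weq_trans[OF k(2) weq_append[OF g(1) weq_refl]] .
  then obtain j' k' where jk: "weq M (\<delta> x0 z') (j' @ k')" "set j' \<subseteq> J \<inter> I" "set k' \<subseteq> J \<inter> K"
    using parabolic_intersection[OF cox _ g(2) k(1) h] by blast
  have "weq M (\<delta> x0 z) (\<delta> x0 z' @ rev k)"
    using weq_sym[OF k(2)] weq_append_right_iff by blast
  then have "weq M (\<delta> x0 z) (j' @ (k' @ rev k))"
    using weq_trans[OF _ weq_append[OF jk(1) weq_refl]] by simp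
  then obtain y where y: "y \<in> Ch" "same_residue (J \<inter> I) x0 y" "weq M (\<delta> y z) (k' @ rev k)"
    using residue_chamber_on_gallery[OF z x0 _ jk(2)] by blast
  have "same_residue K y z"
    unfolding same_residue_def using y(3) jk(3) k(1) by (intro exI[of _ "k' @ rev k"]) auto
  with y(1,2) show thesis by (rule that)
qed

end

lemma fst_vert [simp]: "fst (vert M Ch \<delta> s x) = s"
  by (simp add: vert_def)

lemma vert_in_X_vertices: "x \<in> Ch \<Longrightarrow> vert M Ch \<delta> s x \<in> X_vertices M Ch \<delta>"
  unfolding X_vertices_def by blast

lemma X_simplexE:
  assumes "X_simplex M Ch \<delta> \<sigma>"
  obtains x where "x \<in> Ch" "\<sigma> = (\<lambda>s. vert M Ch \<delta> s x) ` stype \<sigma>"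
proof -
  obtain x where x: "x \<in> Ch" "\<sigma> \<subseteq> {vert M Ch \<delta> s x | s. True}"
    using assms unfolding X_simplex_def by blast
  then have "\<sigma> = (\<lambda>s. vert M Ch \<delta> s x) ` stype \<sigma>"
    unfolding stype_def by force
  with x(1) show thesis by (rule that)
qed

lemma X_adj_sym: "X_adj M Ch \<delta> u v \<Longrightarrow> X_adj M Ch \<delta> v u"
  unfolding X_adj_def by (auto simp: insert_commute)

lemma X_adj_vert: "x \<in> Ch \<Longrightarrow> s \<noteq> s' \<Longrightarrow> X_adj M Ch \<delta> (vert M Ch \<delta> s x) (vert M Ch \<delta> s' x)"
  unfolding X_adj_def X_simplex_def by (auto dest: arg_cong[of _ _ fst])

lemma X_adj_vertE:
  assumes "X_adj M Ch \<delta> v (vert M Ch \<delta> s x)"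
  obtains z where "z \<in> Ch" "v = vert M Ch \<delta> (fst v) z" "vert M Ch \<delta> s x = vert M Ch \<delta> s z" "fst v \<noteq> s"
proof -
  have ne: "v \<noteq> vert M Ch \<delta> s x" using assms unfolding X_adj_def by blast
  obtain z where z: "z \<in> Ch" "v \<in> {vert M Ch \<delta> s' z | s'. True}"
    "vert M Ch \<delta> s x \<in> {vert M Ch \<delta> s' z | s'. True}"
    using assms unfolding X_adj_def X_simplex_def by blast
  then obtain s1 s2 where "v = vert M Ch \<delta> s1 z" "vert M Ch \<delta> s x = vert M Ch \<delta> s2 z" by blast
  then have vz: "v = vert M Ch \<delta> (fst v) z" and sz: "vert M Ch \<delta> s x = vert M Ch \<delta> s z"
    by (metis fst_vert)+
  have "fst v \<noteq> s" using ne vz sz by metis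
  with z(1) vz sz show thesis by (rule that)
qed

lemma hat_adj_imp_X_adj:
  assumes "hat_adj M Ch \<delta> K v u" "fst u \<notin> {Tc, Td}"
  shows "X_adj M Ch \<delta> v u"
proof -
  have "fst v = fst u \<and> fst v \<in> {Tc, Td}" if "friends M Ch v u \<delta> \<or> acquaintances M Ch \<delta> K v u"
    using that unfolding friends_def acquaintances_def by (elim disjE conjE) simp_all
  then show ?thesis using assms unfolding hat_adj_def by auto
qed

lemma link_flag_complex_eq:
  assumes fin: "finite L" "finite \<sigma>" and sub: "L \<subseteq> V" "\<sigma> \<subseteq> V" and disj: "L \<inter> \<sigma> = {}"
    and clique: "\<And>u w. u \<in> L \<union> \<sigma> \<Longrightarrow> w \<in> L \<union> \<sigma> \<Longrightarrow> u \<noteq> w \<Longrightarrow> E u w"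
    and maximal: "\<And>v. v \<in> V \<Longrightarrow> v \<notin> \<sigma> \<Longrightarrow> \<forall>u\<in>\<sigma>. E v u \<Longrightarrow> v \<in> L"
  shows "link (flag_complex V E) \<sigma> = {\<tau>. \<tau> \<noteq> {} \<and> \<tau> \<subseteq> L}"
proof (intro equalityI subsetI)
  fix \<tau> assume "\<tau> \<in> link (flag_complex V E) \<sigma>"
  then have \<tau>: "\<tau> \<noteq> {}" "\<tau> \<subseteq> V" "\<tau> \<inter> \<sigma> = {}" "\<forall>u\<in>\<tau> \<union> \<sigma>. \<forall>w\<in>\<tau> \<union> \<sigma>. u \<noteq> w \<longrightarrow> E u w"
    unfolding link_def flag_complex_def by simp_all
  have "v \<in> L" if "v \<in> \<tau>" for v
  proof (rule maximal)
    show "v \<in> V" "v \<notin> \<sigma>" using \<tau>(2,3) that by auto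
    show "\<forall>u\<in>\<sigma>. E v u"
    proof
      fix u assume u: "u \<in> \<sigma>"
      then have "v \<noteq> u" using \<tau>(3) that by blast
      then show "E v u" using \<tau>(4) that u by simp
    qed
  qed
  with \<tau>(1) show "\<tau> \<in> {\<tau>. \<tau> \<noteq> {} \<and> \<tau> \<subseteq> L}" by blast
next
  fix \<tau> assume "\<tau> \<in> {\<tau>. \<tau> \<noteq> {} \<and> \<tau> \<subseteq> L}"
  then have \<tau>: "\<tau> \<noteq> {}" "\<tau> \<subseteq> L" by auto
  have cl: "E u w" if "u \<in> \<tau> \<union> \<sigma>" "w \<in> \<tau> \<union> \<sigma>" "u \<noteq> w" for u w
    using that \<tau>(2) by (intro clique) auto
  have "finite \<tau>" using finite_subset[OF \<tau>(2) fin(1)] .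
  then have "\<tau> \<in> flag_complex V E" "\<tau> \<union> \<sigma> \<in> flag_complex V E"
    unfolding flag_complex_def using \<tau> fin(2) sub cl by auto
  moreover have "\<tau> \<inter> \<sigma> = {}" using \<tau>(2) disj by blast
  ultimately show "\<tau> \<in> link (flag_complex V E) \<sigma>" unfolding link_def by blast
qed

section \<open>The link of an edge of type ab\<close>

lemma UNIV_gen: "(UNIV :: gen set) = {Ta, Tb, Tc, Td}"
  using gen.exhaust by auto

instance gen :: finite
  by standard (simp add: UNIV_gen)

lemma Compl_Ta_Tb: "- {Tb} \<inter> - {Ta} = {Tc, Td}"
proof (rule set_eqI)
  fix x show "x \<in> - {Tb} \<inter> - {Ta} \<longleftrightarrow> x \<in> {Tc, Td}" by (cases x) auto
qed

lemma edge_label_ab_eq: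
  assumes cox: "coxeter_matrix M" shows "edge_label M {Ta, Tb} = M Tc Td"
proof -
  have U: "UNIV - {Ta, Tb} = {Tc, Td}" by (auto simp: UNIV_gen)
  have sym: "M Td Tc = M Tc Td" using cox unfolding coxeter_matrix_def by metis
  show ?thesis unfolding edge_label_def U
  proof (rule the_equality)
    fix n assume "\<exists>s t. s \<noteq> t \<and> {Tc, Td} = {s, t} \<and> n = M s t"
    then show "n = M Tc Td" using sym by (auto simp: doubleton_eq_iff)
  qed blast
qed

locale ab_edge = coxeter_building M Ch \<delta> for M :: "gen \<Rightarrow> gen \<Rightarrow> nat" and Ch :: "'c set" and \<delta> +
  fixes x0 :: 'c
  assumes Mcd: "M Tc Td = 2" and thick: "finite_thickness M Ch \<delta>" and x0: "x0 \<in> Ch"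
begin

abbreviation V where "V s y \<equiv> vert M Ch \<delta> s y"

definition res_cd where "res_cd = {y \<in> Ch. same_residue {Tc, Td} x0 y}"

definition link_vertices where
  "link_vertices = (\<lambda>y. V Tc y) ` res_cd \<union> (\<lambda>y. V Td y) ` res_cd"

lemma res_cd_Ch: "y \<in> res_cd \<Longrightarrow> y \<in> Ch"
  by (simp add: res_cd_def)

lemma x0_in_res_cd: "x0 \<in> res_cd"
  unfolding res_cd_def using x0 same_residue_refl by blast

lemma vert_ab_res_cd: assumes "y \<in> res_cd" "s \<in> {Ta, Tb}" shows "V s y = V s x0"
proof -
  have y: "y \<in> Ch" and r: "same_residue {Tc, Td} x0 y" using assms unfolding res_cd_def by auto
  have "same_residue (- {s}) x0 y" by (rule same_residue_mono[OF _ r]) (use assms(2) in auto)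
  then show ?thesis using vert_eq_iff_residue[OF x0 y, of s] by simp
qed

lemma same_residue_res_cd: assumes "y1 \<in> res_cd" "y2 \<in> res_cd" shows "same_residue {Tc, Td} y1 y2"
proof -
  have "same_residue {Tc, Td} y1 x0" using assms(1) same_residue_sym[OF x0] unfolding res_cd_def by blast
  then show ?thesis
    using same_residue_trans[OF res_cd_Ch[OF assms(1)] x0 res_cd_Ch[OF assms(2)]] assms(2)
    unfolding res_cd_def by blast
qed

lemma weq_cd_word_cases:
  "set w \<subseteq> {Tc, Td} \<Longrightarrow> weq M w [] \<or> weq M w [Tc] \<or> weq M w [Td] \<or> weq M w [Td, Tc]"
  using weq_commuting_pair_word_cases[of Tc Td M w] Mcd by simp

lemma finite_res_cd: "finite res_cd"
proof -
  have adj_fin: "finite {x' \<in> Ch. weq M (\<delta> x' x) [s]}" if "x \<in> Ch" for x s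
    using thick that unfolding finite_thickness_def by blast
  define Fc where "Fc = {x' \<in> Ch. weq M (\<delta> x' x0) [Tc]}"
  define Fd where "Fd = {x' \<in> Ch. weq M (\<delta> x' x0) [Td]}"
  define G where "G = (\<Union>u\<in>Fc. {x' \<in> Ch. weq M (\<delta> x' u) [Td]})"
  have fin: "finite ({x0} \<union> Fc \<union> Fd \<union> G)"
    unfolding Fc_def Fd_def G_def using adj_fin x0 by (auto intro!: finite_UN_I)
  have "res_cd \<subseteq> {x0} \<union> Fc \<union> Fd \<union> G"
  proof
    fix y assume yR: "y \<in> res_cd"
    then have y: "y \<in> Ch" by (rule res_cd_Ch)
    have "same_residue {Tc, Td} y x0" using same_residue_sym[OF x0 y] yR unfolding res_cd_def by blast
    then obtain w where w: "weq M (\<delta> y x0) w" "set w \<subseteq> {Tc, Td}" unfolding same_residue_def by blast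
    from weq_cd_word_cases[OF w(2)] show "y \<in> {x0} \<union> Fc \<union> Fd \<union> G"
    proof (elim disjE)
      assume "weq M w []" then show ?thesis using delta_weq_Nil_imp_eq[OF y x0 w(1)] by simp
    next
      assume "weq M w [Tc]" then show ?thesis using weq_trans[OF w(1)] y unfolding Fc_def by blast
    next
      assume "weq M w [Td]" then show ?thesis using weq_trans[OF w(1)] y unfolding Fd_def by blast
    next
      assume "weq M w [Td, Tc]"
      then obtain u where u: "u \<in> Ch" "weq M (\<delta> u y) [Td]" "weq M (\<delta> u x0) [Tc]"
        using delta_ConsE[OF x0 y weq_trans[OF w(1)]] by blast
      have "weq M (\<delta> y u) [Td]" using weq_trans[OF delta_sym[OF u(1) y] weq_rev[OF u(2)]] by simp
      then show ?thesis using u y unfolding G_def Fc_def by blast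
    qed
  qed
  then show ?thesis using fin finite_subset by blast
qed

lemma common_chamber_cd:
  assumes y1: "y1 \<in> res_cd" and y2: "y2 \<in> res_cd"
  obtains u where "u \<in> Ch" "V Tc u = V Tc y1" "V Td u = V Td y2"
proof -
  have c1: "y1 \<in> Ch" and c2: "y2 \<in> Ch" using y1 y2 res_cd_Ch by auto
  obtain w where w: "weq M (\<delta> y1 y2) w" "set w \<subseteq> {Tc, Td}"
    using same_residue_res_cd[OF y1 y2] unfolding same_residue_def by blast
  have rs: "same_residue (-{s}) a b" if "weq M (\<delta> a b) [t]" "t \<noteq> s" for a b s t
    unfolding same_residue_def using that by (intro exI[of _ "[t]"]) auto
  from weq_cd_word_cases[OF w(2)] show thesis
  proof (elim disjE)
    assume "weq M w []" then have "y1 = y2" using delta_weq_Nil_imp_eq[OF c1 c2 w(1)] by simp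
    then show thesis using c1 that by blast
  next
    assume "weq M w [Tc]"
    then have "same_residue (-{Td}) y1 y2" using rs weq_trans[OF w(1)] by blast
    then show thesis using vert_eq_iff_residue[OF c1 c2] c1 that by blast
  next
    assume "weq M w [Td]"
    then have "same_residue (-{Tc}) y1 y2" using rs weq_trans[OF w(1)] by blast
    then show thesis using vert_eq_iff_residue[OF c1 c2] c2 that by metis
  next
    assume "weq M w [Td, Tc]"
    then obtain u where u: "u \<in> Ch" "weq M (\<delta> u y1) [Td]" "weq M (\<delta> u y2) [Tc]"
      using delta_ConsE[OF c2 c1 weq_trans[OF w(1)]] by blast
    have "V Td u = V Td y2" using rs[OF u(3)] vert_eq_iff_residue[OF u(1) c2] by blast
    moreover have "V Tc u = V Tc y1" using rs[OF u(2)] vert_eq_iff_residue[OF u(1) c1] by blast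
    ultimately show thesis using u(1) that by blast
  qed
qed

lemma link_vertexE:
  assumes "v \<in> link_vertices"
  obtains y where "y \<in> res_cd" "v = V (fst v) y" "fst v \<in> {Tc, Td}"
proof -
  obtain y s where "y \<in> res_cd" "s \<in> {Tc, Td}" "v = V s y"
    using assms unfolding link_vertices_def by blast
  then show thesis using that by simp
qed

lemma finite_link_vertices: "finite link_vertices"
  unfolding link_vertices_def using finite_res_cd by simp

lemma link_vertices_nonempty: "link_vertices \<noteq> {}"
  unfolding link_vertices_def using x0_in_res_cd by auto

lemma link_vertices_subset: "link_vertices \<subseteq> X_vertices M Ch \<delta>"
  unfolding link_vertices_def using vert_in_X_vertices[OF res_cd_Ch] by auto

lemma X_adj_link_vertex_edge:
  assumes "v \<in> link_vertices" "s \<in> {Ta, Tb}"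
  shows "X_adj M Ch \<delta> v (V s x0)"
proof -
  obtain y where y: "y \<in> res_cd" "v = V (fst v) y" "fst v \<in> {Tc, Td}"
    using link_vertexE[OF assms(1)] by blast
  have "fst v \<noteq> s" using y(3) assms(2) by auto
  then have "X_adj M Ch \<delta> (V (fst v) y) (V s y)" by (rule X_adj_vert[OF res_cd_Ch[OF y(1)]])
  then show ?thesis using vert_ab_res_cd[OF y(1) assms(2)] y(2) by simp
qed

lemma friends_link_vertices:
  assumes u: "u \<in> link_vertices" and w: "w \<in> link_vertices" and "u \<noteq> w" "fst u = fst w"
  shows "friends M Ch u w \<delta>"
proof -
  define e where "e = {V Ta x0, V Tb x0}"
  have adj: "adj_vs M Ch \<delta> v e" if v: "v \<in> link_vertices" for v
  proof -
    obtain y where y: "y \<in> res_cd" "v = V (fst v) y" "fst v \<in> {Tc, Td}"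
      using link_vertexE[OF v] by blast
    have "e = {V Ta y, V Tb y}" unfolding e_def using vert_ab_res_cd[OF y(1)] by simp
    then have "X_simplex M Ch \<delta> (insert v e)"
      unfolding X_simplex_def using res_cd_Ch[OF y(1)] y(2) by blast
    moreover have "v \<notin> e" using y(3) unfolding e_def by auto
    ultimately show ?thesis unfolding adj_vs_def by blast
  qed
  have "X_simplex M Ch \<delta> e" "stype e = {Ta, Tb}"
    unfolding e_def X_simplex_def stype_def using x0 by auto
  moreover have "fst u \<in> {Tc, Td}" by (rule link_vertexE[OF u])
  ultimately show ?thesis
    unfolding friends_def using assms adj[OF u] adj[OF w] link_vertices_subset
    by (intro conjI exI[of _ e]) auto
qed

lemma X_adj_link_vertices:
  assumes u: "u \<in> link_vertices" and w: "w \<in> link_vertices" and "fst u \<noteq> fst w"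
  shows "X_adj M Ch \<delta> u w"
proof -
  obtain y1 where y1: "y1 \<in> res_cd" "u = V (fst u) y1" "fst u \<in> {Tc, Td}" using link_vertexE[OF u] by blast
  obtain y2 where y2: "y2 \<in> res_cd" "w = V (fst w) y2" "fst w \<in> {Tc, Td}" using link_vertexE[OF w] by blast
  consider "fst u = Tc" "fst w = Td" | "fst u = Td" "fst w = Tc" using assms(3) y1(3) y2(3) by auto
  then show ?thesis
  proof cases
    case 1
    obtain c where c: "c \<in> Ch" "V Tc c = V Tc y1" "V Td c = V Td y2"
      by (rule common_chamber_cd[OF y1(1) y2(1)])
    have "X_adj M Ch \<delta> (V Tc c) (V Td c)" by (rule X_adj_vert[OF c(1)]) simp
    then show ?thesis using c y1(2) y2(2) 1 by simp
  next
    case 2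
    obtain c where c: "c \<in> Ch" "V Tc c = V Tc y2" "V Td c = V Td y1"
      by (rule common_chamber_cd[OF y2(1) y1(1)])
    have "X_adj M Ch \<delta> (V Td c) (V Tc c)" by (rule X_adj_vert[OF c(1)]) simp
    then show ?thesis using c y1(2) y2(2) 2 by simp
  qed
qed

lemma hat_adj_link_clique:
  assumes "u \<in> link_vertices \<union> {V Ta x0, V Tb x0}" "w \<in> link_vertices \<union> {V Ta x0, V Tb x0}" "u \<noteq> w"
  shows "hat_adj M Ch \<delta> K u w"
proof -
  consider "u \<in> link_vertices" "w \<in> link_vertices"
    | "u \<in> link_vertices" "w \<in> {V Ta x0, V Tb x0}"
    | "u \<in> {V Ta x0, V Tb x0}" "w \<in> link_vertices"
    | "u \<in> {V Ta x0, V Tb x0}" "w \<in> {V Ta x0, V Tb x0}"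
    using assms(1,2) by blast
  then have "X_adj M Ch \<delta> u w \<or> friends M Ch u w \<delta>"
  proof cases
    case 1
    then show ?thesis using friends_link_vertices X_adj_link_vertices assms(3) by blast
  next
    case 2
    then show ?thesis using X_adj_link_vertex_edge by blast
  next
    case 3
    then show ?thesis using X_adj_link_vertex_edge X_adj_sym by blast
  next
    case 4
    then show ?thesis using X_adj_vert[OF x0, of Ta Tb] X_adj_vert[OF x0, of Tb Ta] assms(3) by auto
  qed
  then show ?thesis unfolding hat_adj_def by blast
qed

lemma X_adj_ab_imp_link_vertex:
  assumes va: "X_adj M Ch \<delta> v (V Ta x0)" and vb: "X_adj M Ch \<delta> v (V Tb x0)"
  shows "v \<in> link_vertices"
proof -
  obtain z where z: "z \<in> Ch" "v = V (fst v) z" "V Ta x0 = V Ta z" "fst v \<noteq> Ta"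
    by (rule X_adj_vertE[OF va])
  obtain z' where z': "z' \<in> Ch" "v = V (fst v) z'" "V Tb x0 = V Tb z'" "fst v \<noteq> Tb"
    by (rule X_adj_vertE[OF vb])
  have "same_residue (-{Ta}) x0 z" "same_residue (-{Tb}) x0 z'" "same_residue (-{fst v}) z z'"
    using vert_eq_iff_residue x0 z z' by metis+
  then obtain y where y: "y \<in> Ch" "same_residue (-{Tb} \<inter> -{Ta}) x0 y" "same_residue (-{fst v}) y z"
    using common_residue_chamber[OF x0 z(1) z'(1)] by blast
  have "y \<in> res_cd" using y(1,2) Compl_Ta_Tb unfolding res_cd_def by simp
  moreover have "v = V (fst v) y"
    using vert_eq_iff_residue[OF y(1) z(1)] y(3) z(2) by metis
  moreover have "fst v \<in> {Tc, Td}" using z(4) z'(4) by (cases "fst v") auto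
  ultimately show ?thesis unfolding link_vertices_def by (metis UnCI image_eqI insertE singletonD)
qed

lemma link_ab_edge_eq:
  "link (flag_complex (X_vertices M Ch \<delta>) (hat_adj M Ch \<delta> K)) {V Ta x0, V Tb x0}
     = {\<tau>. \<tau> \<noteq> {} \<and> \<tau> \<subseteq> link_vertices}"
proof (rule link_flag_complex_eq)
  show "finite link_vertices" by (rule finite_link_vertices)
  show "link_vertices \<subseteq> X_vertices M Ch \<delta>" by (rule link_vertices_subset)
  show "{V Ta x0, V Tb x0} \<subseteq> X_vertices M Ch \<delta>" by (simp add: vert_in_X_vertices x0)
  have "fst v \<in> {Tc, Td}" if "v \<in> link_vertices" for v by (rule link_vertexE[OF that])
  then show "link_vertices \<inter> {V Ta x0, V Tb x0} = {}" by fastforce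
  show "hat_adj M Ch \<delta> K u w"
    if "u \<in> link_vertices \<union> {V Ta x0, V Tb x0}" "w \<in> link_vertices \<union> {V Ta x0, V Tb x0}" "u \<noteq> w"
    for u w using that by (rule hat_adj_link_clique)
  fix v assume "v \<in> X_vertices M Ch \<delta>" "v \<notin> {V Ta x0, V Tb x0}"
    and "\<forall>u\<in>{V Ta x0, V Tb x0}. hat_adj M Ch \<delta> K v u"
  then have "hat_adj M Ch \<delta> K v (V Ta x0)" "hat_adj M Ch \<delta> K v (V Tb x0)" by simp_all
  then show "v \<in> link_vertices"
    by (intro X_adj_ab_imp_link_vertex) (auto elim: hat_adj_imp_X_adj)
qed simp

end

theorem proposition7p1:
  fixes M :: "gen \<Rightarrow> gen \<Rightarrow> nat"
    and Ch :: "'c set"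
    and \<delta> :: "'c \<Rightarrow> 'c \<Rightarrow> gen list"
    and m k l k' m' :: nat
    and caseI :: bool
  assumes cox: "coxeter_matrix M"
    and rank3_inf: "\<forall>J. card J = 3 \<longrightarrow> infinite (special_subgroup M J)"
    and rank3_types: "\<forall>s t u. distinct [s, t, u] \<longrightarrow>
          {#M s t, M t u, M s u#} \<notin> {{#2, 4, 4#}, {#2, 4, 5#}, {#2, 5, 5#}}"
    and one_two: "card {{s, t} | s t. s \<noteq> t \<and> M s t = 2} = 1"
    and bldg: "W_building M Ch \<delta>"
    and thick: "finite_thickness M Ch \<delta>"
    and lab_ab: "edge_label M {Ta, Tb} = 2"
    and lab_ac: "edge_label M {Ta, Tc} = m" and m6: "m \<ge> 6"
    and lab_ad: "edge_label M {Ta, Td} = k" and k3: "k \<ge> 3"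
    and lab_cd: "edge_label M {Tc, Td} = l" and l3: "l \<ge> 3"
    and k'3: "k' \<ge> 3" and m'6: "m' \<ge> 6"
    and cases: "(caseI \<and> edge_label M {Tb, Tc} = k' \<and> edge_label M {Tb, Td} = m') \<or>
                (\<not> caseI \<and> edge_label M {Tb, Tc} = m' \<and> edge_label M {Tb, Td} = k')"
    and e: "X_simplex M Ch \<delta> e" "stype e = {Ta, Tb}"
  shows "is_simplex_complex
           (link (flag_complex (X_vertices M Ch \<delta>)
                   (hat_adj M Ch \<delta> {{Ta, Td}, if caseI then {Tb, Tc} else {Tb, Td}}))
                 e)"
proof -
  obtain x0 where x0: "x0 \<in> Ch" "e = (\<lambda>s. vert M Ch \<delta> s x0) ` stype e"
    by (rule X_simplexE[OF e(1)])
  then have e_eq: "e = {vert M Ch \<delta> Ta x0, vert M Ch \<delta> Tb x0}" unfolding e(2) by simp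
  have "M Tc Td = 2" using edge_label_ab_eq[OF cox] lab_ab by simp
  then interpret ab_edge M Ch \<delta> x0
    by unfold_locales (use bldg cox thick x0(1) in auto)
  show ?thesis
    unfolding is_simplex_complex_def e_eq link_ab_edge_eq
    using finite_link_vertices link_vertices_nonempty by blast
qed
end
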